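(* Consider the nonautonomous TASEP with $n$ sites, rate functions $\lambda_0,\dots,\lambda_n$ and associated NRDS $\phi$ on $X=\{0,1\}^n$, and let $A(t,\omega):=\bigcap_{t_0\le t}\phi(t,t_0,X,\omega)$. (a) Assume there exist $R>r>0$ such that for each $t\in\mathbb{R}$ there is $t_0<t$ such that the $n+1$ Poisson processes have joint $(r,R,m)$-bounded rates on $[t_0,t)$ with $m=n(n+1)/2$. Then the sets $A(t,\omega)$ define a global random pullback attractor, and $A(t,\omega)$ is a singleton for all $t\in\mathbb{R}$ and almost all $\omega\in\Omega$. (b) If, moreover, there exist $R>r>0$ and $\Delta t>0$ such that the processes have joint $(r,R,m)$-bounded rates with $m=n(n+1)/2$ on every interval $[\tau,\tau+\Delta t)$, $\tau\in\mathbb{R}$, then the $A(t,\omega)$ also provide a global random forward attractor, and $\lim_{t_0\to-\infty}\mathbb{P}(\Gamma(t,t_0))=1$ holds with an exponential rate for every $t$, where $\Gamma(t,t_0):=\{\omega\mid\phi(t,t_0,x_1,\omega)=\phi(t,t_0,x_2,\omega)\ \forall x_1,x_2\in X\}$.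
   Context: Nonautonomous TASEP: $n$ sites; locally integrable rate functions $\lambda_k:\mathbb{R}\to[0,\infty)$, $k=0,\dots,n$ ($0$ = entry, $n$ = exit), with $\int_0^t\lambda_k\to\pm\infty$ as $t\to\pm\infty$; to each $k$ an independent non-homogeneous Poisson process on $\mathbb{R}$ with rate $\lambda_k$ (its points mapped by $M_k(t)=\int_0^t\lambda_k$ form a homogeneous rate-1 Poisson process on $\mathbb{R}$), on a product probability space $(\Omega,\mathcal{F},\mathbb{P})$. Almost surely all points are distinct without accumulation; ordering them yields jump times $t_i(\omega)$, $i\in\mathbb{Z}$, and sites $k_i(\omega)\in\{0,\dots,n\}$. State $x=(s_1,\dots,s_n)\in\{0,1\}^n$. Jump map: $f(x,0)=(1,s_2,\dots,s_n)$; $f(x,n)=(s_1,\dots,s_{n-1},0)$; for $0<k<n$ with $s_k=1,s_{k+1}=0$, $f(x,k)$ sets $s_k=0,s_{k+1}=1$; otherwise $f(x,k)=x$. $\phi(t,t_0,x,\omega)$ results from $x$ by applying $f(\cdot,k_i(\omega))$ for all $i$ with $t_i(\omega)\in[t_0,t)$ in increasing order of $i$. Joint $(r,R,m)$-bounded rates on $[\tau_1,\tau_2)$: there exist $\tau_1=q_0<\dots<q_m=\tau_2$ with $r\le\int_{q_i}^{q_{i+1}}\lambda_k\le R$ for all $i<m$, $k=0,\dots,n$. With discrete metric $d$ on $X$ and $\mathrm{dist}(A_1,A_2)=\sup_{a\in A_1}\inf_{b\in A_2}d(a,b)$: a family $A(t,\omega)$ of compact sets (measurable as subsets of $X\times\Omega$),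 strictly invariant ($\phi(t,t_0,A(t_0,\omega),\omega)=A(t,\omega)$ for $t\ge t_0$ a.s.), is a global random pullback attractor if $\lim_{t_0\to-\infty}\mathrm{dist}(\phi(t,t_0,X,\omega),A(t,\omega))=0$ a.s. for each $t$, and a global random forward attractor if $\lim_{t\to\infty}\mathrm{dist}(\phi(t,t_0,X,\omega),A(t,\omega))=0$ a.s. for each $t_0$. *)

theory Defs
  imports "HOL-Probability.Probability"
begin

(* State space X = {0,1}^n, a state (s_1,...,s_n) is a bool list of length n;
   site s_k is stored at list index k-1. *)
definition stateX :: "nat \<Rightarrow> bool list set" where
  "stateX n = {x. length x = n}"

(* jump map f(x,k); k = 0 entry, k = n exit *)
definition jump :: "nat \<Rightarrow> bool list \<Rightarrow> nat \<Rightarrow> bool list" where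
  "jump n x k =
     (if k = 0 then x[0 := True]
      else if k = n then x[n - 1 := False]
      else if k < n \<and> x ! (k - 1) \<and> \<not> x ! k then x[k - 1 := False, k := True]
      else x)"

(* Ordered list of the site labels of all jumps in [t0,t):
   jump times in increasing order (ties, a null event, broken by site index). *)
definition jump_seq :: "nat \<Rightarrow> (nat \<Rightarrow> 'w \<Rightarrow> real set) \<Rightarrow> 'w \<Rightarrow> real \<Rightarrow> real \<Rightarrow> nat list" where
  "jump_seq n N \<omega> t0 t =
     concat (map (\<lambda>s. filter (\<lambda>k. s \<in> N k \<omega>) [0..<Suc n])
       (sorted_list_of_set (\<Union>k\<in>{..n}. N k \<omega> \<inter> {t0..<t})))"

definition phi :: "nat \<Rightarrow> (nat \<Rightarrow> 'w \<Rightarrow> real set) \<Rightarrow> real \<Rightarrow> real \<Rightarrow> bool list \<Rightarrow> 'w \<Rightarrow> bool list" where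
  "phi n N t t0 x \<omega> = fold (\<lambda>k y. jump n y k) (jump_seq n N \<omega> t0 t) x"

definition pb_set :: "nat \<Rightarrow> (nat \<Rightarrow> 'w \<Rightarrow> real set) \<Rightarrow> real \<Rightarrow> 'w \<Rightarrow> bool list set" where
  "pb_set n N t \<omega> = (\<Inter>t0\<in>{..t}. (\<lambda>x. phi n N t t0 x \<omega>) ` stateX n)"

definition Gamma :: "'w measure \<Rightarrow> nat \<Rightarrow> (nat \<Rightarrow> 'w \<Rightarrow> real set) \<Rightarrow> real \<Rightarrow> real \<Rightarrow> 'w set" where
  "Gamma M n N t t0 = {\<omega> \<in> space M. \<forall>x1\<in>stateX n. \<forall>x2\<in>stateX n.
       phi n N t t0 x1 \<omega> = phi n N t t0 x2 \<omega>}"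

definition admissible_rates :: "nat \<Rightarrow> (nat \<Rightarrow> real \<Rightarrow> real) \<Rightarrow> bool" where
  "admissible_rates n lam \<longleftrightarrow> (\<forall>k\<le>n.
      (\<forall>t. 0 \<le> lam k t) \<and> (\<forall>a b. lam k integrable_on {a..b}) \<and>
      filterlim (\<lambda>t. integral {0..t} (lam k)) at_top at_top \<and>
      filterlim (\<lambda>t. integral {t..0} (lam k)) at_top at_bot)"

definition poisson_law :: "real \<Rightarrow> nat pmf" where
  "poisson_law mu = (if mu = 0 then return_pmf 0 else poisson_pmf mu)"

(* N k omega is the point set of the k-th process; these are independent
   non-homogeneous Poisson processes on R with rates lam k, k = 0..n. *)
definition indep_poisson_procs ::
  "'w measure \<Rightarrow> nat \<Rightarrow> (nat \<Rightarrow> real \<Rightarrow> real) \<Rightarrow> (nat \<Rightarrow> 'w \<Rightarrow> real set) \<Rightarrow> bool" where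
  "indep_poisson_procs M n lam N \<longleftrightarrow>
     prob_space M \<and>
     (\<forall>k\<le>n. \<forall>\<omega>. \<forall>a b. finite (N k \<omega> \<inter> {a..b})) \<and>
     (\<forall>k\<le>n. \<forall>a b. a \<le> b \<longrightarrow>
        (\<lambda>\<omega>. card (N k \<omega> \<inter> {a..<b})) \<in> measurable M (count_space UNIV) \<and>
        distr M (count_space UNIV) (\<lambda>\<omega>. card (N k \<omega> \<inter> {a..<b}))
          = measure_pmf (poisson_law (integral {a..b} (lam k)))) \<and>
     (\<forall>(I::nat set) kk aa bb. finite I \<and> (\<forall>i\<in>I. kk i \<le> n \<and> aa i \<le> bb i) \<and>
        (\<forall>i\<in>I. \<forall>j\<in>I. i \<noteq> j \<longrightarrow> kk i \<noteq> kk j \<or> {aa i..<bb i} \<inter> {aa j..<bb j} = {})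
        \<longrightarrow> prob_space.indep_vars M (\<lambda>_. count_space UNIV)
              (\<lambda>i \<omega>. card (N (kk i) \<omega> \<inter> {aa i..<bb i})) I)"

definition joint_bounded_rates ::
  "nat \<Rightarrow> (nat \<Rightarrow> real \<Rightarrow> real) \<Rightarrow> real \<Rightarrow> real \<Rightarrow> nat \<Rightarrow> real \<Rightarrow> real \<Rightarrow> bool" where
  "joint_bounded_rates n lam r R m \<tau>1 \<tau>2 \<longleftrightarrow>
     (\<exists>q::nat \<Rightarrow> real. q 0 = \<tau>1 \<and> q m = \<tau>2 \<and> (\<forall>i<m. q i < q (Suc i)) \<and>
        (\<forall>i<m. \<forall>k\<le>n. r \<le> integral {q i..q (Suc i)} (lam k) \<and>
                        integral {q i..q (Suc i)} (lam k) \<le> R))"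

definition hdist :: "'a set \<Rightarrow> 'a set \<Rightarrow> ereal" where
  "hdist A1 A2 = (SUP a\<in>A1. INF b\<in>A2. if a = b then 0 else 1)"

definition random_invariant_family ::
  "'x set \<Rightarrow> (real \<Rightarrow> real \<Rightarrow> 'x \<Rightarrow> 'w \<Rightarrow> 'x) \<Rightarrow> 'w measure \<Rightarrow> (real \<Rightarrow> 'w \<Rightarrow> 'x set) \<Rightarrow> bool" where
  "random_invariant_family X \<phi> M A \<longleftrightarrow>
     (\<forall>t \<omega>. A t \<omega> \<subseteq> X \<and> compactin (discrete_topology X) (A t \<omega>)) \<and>
     (\<forall>t. {(x, \<omega>). x \<in> X \<and> \<omega> \<in> space M \<and> x \<in> A t \<omega>} \<in> sets (count_space X \<Otimes>\<^sub>M M)) \<and>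
     (\<forall>t0 t. t0 \<le> t \<longrightarrow> (AE \<omega> in M. (\<lambda>x. \<phi> t t0 x \<omega>) ` A t0 \<omega> = A t \<omega>))"

definition global_pullback_attractor ::
  "'x set \<Rightarrow> (real \<Rightarrow> real \<Rightarrow> 'x \<Rightarrow> 'w \<Rightarrow> 'x) \<Rightarrow> 'w measure \<Rightarrow> (real \<Rightarrow> 'w \<Rightarrow> 'x set) \<Rightarrow> bool" where
  "global_pullback_attractor X \<phi> M A \<longleftrightarrow> random_invariant_family X \<phi> M A \<and>
     (\<forall>t. AE \<omega> in M. ((\<lambda>t0. hdist ((\<lambda>x. \<phi> t t0 x \<omega>) ` X) (A t \<omega>)) \<longlongrightarrow> 0) at_bot)"

definition global_forward_attractor ::
  "'x set \<Rightarrow> (real \<Rightarrow> real \<Rightarrow> 'x \<Rightarrow> 'w \<Rightarrow> 'x) \<Rightarrow> 'w measure \<Rightarrow> (real \<Rightarrow> 'w \<Rightarrow> 'x set) \<Rightarrow> bool" where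
  "global_forward_attractor X \<phi> M A \<longleftrightarrow> random_invariant_family X \<phi> M A \<and>
     (\<forall>t0. AE \<omega> in M. ((\<lambda>t. hdist ((\<lambda>x. \<phi> t t0 x \<omega>) ` X) (A t \<omega>)) \<longlongrightarrow> 0) at_top)"

end

theory Submission
  imports Defs "HOL-Real_Asymp.Real_Asymp"
begin

text \<open>
  Let \<open>m = n(n+1)/2\<close>. Firing the sites in the order \<open>0, \<dots>, n-1; 0, \<dots>, n-2; \<dots>; 0\<close>
  drives every state to the full state: the round \<open>0, \<dots>, j\<close> feeds a particle in and carries
  it to site \<open>j+1\<close>, and the sites to its right are already occupied. Split an interval into
  \<open>m\<close> cells in each of which every clock has integrated rate in \<open>[r, R]\<close>. With probability
  at least \<open>min (1 - exp (-r)) (exp (-R)) ^ (m (n+1))\<close>, exactly the clock prescribed by the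
  word rings in each cell, and then the dynamics over the interval maps all of \<open>X\<close> to one
  state. These events are independent for disjoint intervals, so almost surely some interval
  before \<open>t\<close> collapses \<open>X\<close>; then \<open>A(t, \<omega>)\<close> is the image of that single state and
  every pullback trajectory reaches it. Under (b) the same applies to intervals after any
  \<open>t\<^sub>0\<close>, which gives forward attraction, and \<open>[t\<^sub>0, t)\<close> contains
  \<open>\<lfloor>(t - t\<^sub>0)/\<Delta>t\<rfloor>\<close> independent chances, which gives the exponential bound
  on \<open>1 - P(\<Gamma>(t, t\<^sub>0))\<close>.
\<close>

section \<open>Jump sequences and the cocycle property\<close>

lemma length_jump [simp]: "length (jump n x k) = length x"
  by (simp add: jump_def)

lemma length_fold_jump [simp]: "length (fold (\<lambda>k y. jump n y k) ks x) = length x"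
  by (induction ks arbitrary: x) auto

lemma jump_idem: "jump n (jump n x k) k = jump n x k"
  by (cases "k < length x") (auto simp: jump_def nth_list_update list_update_beyond)

lemma finite_stateX: "finite (stateX n)"
  using finite_lists_length_eq[of "UNIV :: bool set" n] by (simp add: stateX_def)

lemma replicate_in_stateX: "replicate n b \<in> stateX n"
  by (simp add: stateX_def)

lemma phi_in_stateX: "x \<in> stateX n \<Longrightarrow> phi n N t t0 x \<omega> \<in> stateX n"
  by (simp add: stateX_def phi_def)

lemma sorted_list_of_set_Un_less:
  fixes A B :: "'a::linorder set"
  assumes "finite A" "finite B" "\<And>a b. a \<in> A \<Longrightarrow> b \<in> B \<Longrightarrow> a < b"
  shows "sorted_list_of_set (A \<union> B) = sorted_list_of_set A @ sorted_list_of_set B"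
proof -
  let ?l = "sorted_list_of_set A @ sorted_list_of_set B"
  have "sorted ?l" "distinct ?l"
    using assms by (fastforce simp: sorted_append less_imp_le)+
  moreover have "set ?l = A \<union> B"
    using assms by simp
  ultimately show ?thesis
    by (metis sorted_list_of_set_sort_remdups distinct_remdups_id sorted_sort_id)
qed

definition locally_finite_jumps :: "nat \<Rightarrow> (nat \<Rightarrow> 'w \<Rightarrow> real set) \<Rightarrow> 'w \<Rightarrow> bool" where
  "locally_finite_jumps n N \<omega> \<longleftrightarrow> (\<forall>k\<le>n. \<forall>a b. finite (N k \<omega> \<inter> {a..b}))"

lemma finite_jump_times:
  assumes "locally_finite_jumps n N \<omega>"
  shows "finite (\<Union>k\<in>{..n}. N k \<omega> \<inter> {a..<b})"
  using assms unfolding locally_finite_jumps_def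
  by (intro finite_UN_I) (auto intro: finite_subset[of _ "N _ \<omega> \<inter> {a..b}"])

lemma jump_seq_append:
  assumes "locally_finite_jumps n N \<omega>" "a \<le> b" "b \<le> c"
  shows "jump_seq n N \<omega> a c = jump_seq n N \<omega> a b @ jump_seq n N \<omega> b c"
proof -
  have U: "(\<Union>k\<in>{..n}. N k \<omega> \<inter> {a..<c}) =
      (\<Union>k\<in>{..n}. N k \<omega> \<inter> {a..<b}) \<union> (\<Union>k\<in>{..n}. N k \<omega> \<inter> {b..<c})"
    using assms by auto
  show ?thesis
    unfolding jump_seq_def U
    by (subst sorted_list_of_set_Un_less) (use finite_jump_times[OF assms(1)] in auto)
qed

lemma phi_cocycle:
  assumes "locally_finite_jumps n N \<omega>" "a \<le> b" "b \<le> c"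
  shows "phi n N c a x \<omega> = phi n N c b (phi n N b a x \<omega>) \<omega>"
  using jump_seq_append[OF assms] by (simp add: phi_def)

lemma phi_no_jumps:
  assumes "\<And>k. k \<le> n \<Longrightarrow> N k \<omega> \<inter> {a..<b} = {}"
  shows "phi n N b a x \<omega> = x"
  using assms by (simp add: phi_def jump_seq_def)

lemma fold_jump_replicate: "fold (\<lambda>k y. jump n y k) (replicate (Suc c) k) x = jump n x k"
  by (induction c arbitrary: x) (simp_all add: jump_idem)

lemma phi_single_site:
  assumes fin: "locally_finite_jumps n N \<omega>" and "k0 \<le> n"
    and only: "\<And>k. k \<le> n \<Longrightarrow> N k \<omega> \<inter> {a..<b} \<noteq> {} \<longleftrightarrow> k = k0"
  shows "phi n N b a x \<omega> = jump n x k0"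
proof -
  let ?ts = "sorted_list_of_set (\<Union>k\<in>{..n}. N k \<omega> \<inter> {a..<b})"
  have "filter (\<lambda>k. s \<in> N k \<omega>) [0..<Suc n] = [k0]" if "s \<in> set ?ts" for s
  proof -
    from that obtain k' where "k' \<le> n" "s \<in> N k' \<omega>" "a \<le> s" "s < b"
      using finite_jump_times[OF fin] by auto
    then have "s \<in> N k \<omega> \<longleftrightarrow> k = k0" if "k \<le> n" for k
      using only[OF that] only[OF \<open>k' \<le> n\<close>] by auto
    then have "filter (\<lambda>k. s \<in> N k \<omega>) [0..<Suc n] = filter (\<lambda>k. k = k0) [0..<Suc n]"
      by (intro filter_cong) auto
    also have "\<dots> = [k0]"
      using \<open>k0 \<le> n\<close> by (induction n) auto
    finally show ?thesis .
  qed
  then have "jump_seq n N \<omega> a b = replicate (length ?ts) k0"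
    unfolding jump_seq_def by (simp add: map_replicate_const cong: map_cong)
  moreover have "?ts \<noteq> []"
    using only[OF \<open>k0 \<le> n\<close>] \<open>k0 \<le> n\<close> finite_jump_times[OF fin] by auto
  then obtain c where "length ?ts = Suc c"
    using not0_implies_Suc by blast
  ultimately show ?thesis
    by (simp only: phi_def fold_jump_replicate)
qed

section \<open>A synchronizing word\<close>

fun sync_word :: "nat \<Rightarrow> nat list" where
  "sync_word 0 = []"
| "sync_word (Suc j) = [0..<Suc j] @ sync_word j"

lemma length_sync_word: "length (sync_word n) = n * (n + 1) div 2"
  by (induction n) auto

lemma set_sync_word: "set (sync_word n) \<subseteq> {..<n}"
  by (induction n) auto

lemma fold_jump_upt:
  assumes "length x = n" "k < n"
  shows "fold (\<lambda>k y. jump n y k) [0..<Suc k] x ! k \<and>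
    (\<forall>i>k. fold (\<lambda>k y. jump n y k) [0..<Suc k] x ! i = x ! i)"
  using assms(2)
proof (induction k)
  case 0
  then show ?case using assms by (simp add: jump_def nth_list_update)
next
  case (Suc k)
  let ?y = "fold (\<lambda>k y. jump n y k) [0..<Suc k] x"
  have y: "?y ! k" "\<forall>i>k. ?y ! i = x ! i" "length ?y = n"
    using Suc assms by auto
  have "fold (\<lambda>k y. jump n y k) [0..<Suc (Suc k)] x = jump n ?y (Suc k)"
    by simp
  then show ?case
    using y \<open>Suc k < n\<close> by (auto simp: jump_def nth_list_update)
qed

lemma fold_jump_sync_word:
  assumes "length x = n" "j \<le> n" "\<forall>i. j \<le> i \<longrightarrow> i < n \<longrightarrow> x ! i"
  shows "fold (\<lambda>k y. jump n y k) (sync_word j) x = replicate n True"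
  using assms
proof (induction j arbitrary: x)
  case 0
  then show ?case by (simp add: list_eq_iff_nth_eq)
next
  case (Suc j)
  let ?y = "fold (\<lambda>k y. jump n y k) [0..<Suc j] x"
  have "?y ! j" "\<forall>i>j. ?y ! i = x ! i"
    using fold_jump_upt[of x n j] Suc.prems by auto
  then have "\<forall>i. j \<le> i \<longrightarrow> i < n \<longrightarrow> ?y ! i"
    using Suc.prems(3) by (metis Suc_leI le_neq_implies_less)
  then have "fold (\<lambda>k y. jump n y k) (sync_word j) ?y = replicate n True"
    using Suc.prems by (intro Suc.IH) auto
  then show ?case by simp
qed

definition spells_word ::
  "nat \<Rightarrow> (nat \<Rightarrow> 'w \<Rightarrow> real set) \<Rightarrow> nat list \<Rightarrow> (nat \<Rightarrow> real) \<Rightarrow> 'w \<Rightarrow> bool" where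
  "spells_word n N L q \<omega> \<longleftrightarrow>
     (\<forall>i<length L. \<forall>k\<le>n. N k \<omega> \<inter> {q i..<q (Suc i)} \<noteq> {} \<longleftrightarrow> k = L ! i)"

lemma spells_word_increasing:
  assumes "set L \<subseteq> {..n}" "spells_word n N L q \<omega>" "i < length L"
  shows "q i < q (Suc i)"
proof -
  have "L ! i \<le> n"
    using assms(1,3) nth_mem by blast
  then have "N (L ! i) \<omega> \<inter> {q i..<q (Suc i)} \<noteq> {}"
    using assms(2,3) by (simp add: spells_word_def)
  then show ?thesis by auto
qed

lemma phi_spells_word:
  assumes fin: "locally_finite_jumps n N \<omega>" and L: "set L \<subseteq> {..n}"
    and spells: "spells_word n N L q \<omega>"
  shows "phi n N (q (length L)) (q 0) x \<omega> = fold (\<lambda>k y. jump n y k) L x"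
proof -
  have incr: "q i \<le> q (Suc i)" if "i \<in> {..<length L}" for i
    using spells_word_increasing[OF L spells] that by (simp add: less_imp_le)
  have "phi n N (q i) (q 0) x \<omega> = fold (\<lambda>k y. jump n y k) (take i L) x" if "i \<le> length L" for i
    using that
  proof (induction i)
    case 0
    show ?case by (simp add: phi_no_jumps)
  next
    case (Suc i)
    then have "i < length L" by simp
    have cocycle: "phi n N (q (Suc i)) (q 0) x \<omega> = phi n N (q (Suc i)) (q i) (phi n N (q i) (q 0) x \<omega>) \<omega>"
    proof (rule phi_cocycle[OF fin])
      show "q 0 \<le> q i"
        by (rule lift_Suc_mono_le_ivl[of "{..<length L}" q]) (use incr \<open>i < length L\<close> in auto)
      show "q i \<le> q (Suc i)"
        using incr \<open>i < length L\<close> by simp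
    qed
    have "L ! i \<le> n"
      using L nth_mem[OF \<open>i < length L\<close>] by blast
    then have "phi n N (q (Suc i)) (q i) y \<omega> = jump n y (L ! i)" for y
      using spells \<open>i < length L\<close>
      by (intro phi_single_site[OF fin]) (auto simp: spells_word_def)
    then show ?case
      using cocycle Suc \<open>i < length L\<close> by (simp add: take_Suc_conv_app_nth)
  qed
  then show ?thesis by simp
qed

section \<open>Collapsing intervals and the pullback set\<close>

definition collapses :: "nat \<Rightarrow> (nat \<Rightarrow> 'w \<Rightarrow> real set) \<Rightarrow> real \<Rightarrow> real \<Rightarrow> 'w \<Rightarrow> bool" where
  "collapses n N lo hi \<omega> \<longleftrightarrow> lo \<le> hi \<and> (\<exists>c. \<forall>x\<in>stateX n. phi n N hi lo x \<omega> = c)"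

lemma spells_sync_word_collapses:
  assumes fin: "locally_finite_jumps n N \<omega>" and "spells_word n N (sync_word n) q \<omega>"
  shows "collapses n N (q 0) (q (length (sync_word n))) \<omega>"
proof -
  have L: "set (sync_word n) \<subseteq> {..n}"
    using set_sync_word by fastforce
  have "q 0 \<le> q (length (sync_word n))"
    by (rule lift_Suc_mono_le_ivl[of "{..<length (sync_word n)}" q])
      (use spells_word_increasing[OF L assms(2)] in \<open>auto simp: less_imp_le\<close>)
  moreover have "phi n N (q (length (sync_word n))) (q 0) x \<omega> = replicate n True" if "x \<in> stateX n" for x
    using phi_spells_word[OF fin L assms(2)] that fold_jump_sync_word[of x n n]
    by (simp add: stateX_def)
  ultimately show ?thesis
    unfolding collapses_def by blast
qed

lemma phi_eq_if_collapses:
  assumes fin: "locally_finite_jumps n N \<omega>"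
    and const: "\<forall>x\<in>stateX n. phi n N hi lo x \<omega> = c"
    and "t0 \<le> lo" "lo \<le> hi" "hi \<le> t" "x \<in> stateX n"
  shows "phi n N t t0 x \<omega> = phi n N t hi c \<omega>"
proof -
  have "phi n N t t0 x \<omega> = phi n N t hi (phi n N hi lo (phi n N lo t0 x \<omega>) \<omega>) \<omega>"
    using assms(3-5) phi_cocycle[OF fin, of t0 hi t] phi_cocycle[OF fin, of t0 lo hi] by simp
  then show ?thesis
    using const phi_in_stateX[OF \<open>x \<in> stateX n\<close>, of N lo t0 \<omega>] by simp
qed

lemma collapses_widen:
  assumes "locally_finite_jumps n N \<omega>" "collapses n N lo hi \<omega>" "t0 \<le> lo" "hi \<le> t"
  shows "collapses n N t0 t \<omega>"
proof -
  obtain c where "lo \<le> hi" and "\<forall>x\<in>stateX n. phi n N hi lo x \<omega> = c"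
    using assms(2) unfolding collapses_def by blast
  then have "\<forall>x\<in>stateX n. phi n N t t0 x \<omega> = phi n N t hi c \<omega>"
    using phi_eq_if_collapses[OF assms(1) _ assms(3) _ assms(4)] by simp
  then show ?thesis
    using \<open>lo \<le> hi\<close> assms(3,4) unfolding collapses_def by auto
qed

lemma pb_set_subset_image: "t0 \<le> t \<Longrightarrow> pb_set n N t \<omega> \<subseteq> (\<lambda>x. phi n N t t0 x \<omega>) ` stateX n"
  unfolding pb_set_def by blast

lemma pb_set_subset_stateX: "pb_set n N t \<omega> \<subseteq> stateX n"
proof
  fix x assume "x \<in> pb_set n N t \<omega>"
  then obtain y where "y \<in> stateX n" "x = phi n N t t y \<omega>"
    using pb_set_subset_image[of t t n N \<omega>] by blast
  then show "x \<in> stateX n"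
    using phi_in_stateX by simp
qed

lemma image_pb_set_subset:
  assumes fin: "locally_finite_jumps n N \<omega>" and "t0 \<le> t"
  shows "(\<lambda>x. phi n N t t0 x \<omega>) ` pb_set n N t0 \<omega> \<subseteq> pb_set n N t \<omega>"
proof (intro subsetI)
  fix z assume "z \<in> (\<lambda>x. phi n N t t0 x \<omega>) ` pb_set n N t0 \<omega>"
  then obtain x where x: "x \<in> pb_set n N t0 \<omega>" "z = phi n N t t0 x \<omega>"
    by auto
  have "z \<in> (\<lambda>x. phi n N t s x \<omega>) ` stateX n" if "s \<le> t" for s
  proof (cases "s \<le> t0")
    case True
    then obtain y where "y \<in> stateX n" "x = phi n N t0 s y \<omega>"
      using x(1) unfolding pb_set_def by blast
    then show ?thesis
      using x(2) phi_cocycle[OF fin True \<open>t0 \<le> t\<close>] by auto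
  next
    case False
    then have "z = phi n N t s (phi n N s t0 x \<omega>) \<omega>"
      using x that phi_cocycle[OF fin, of t0 s t] by simp
    moreover have "phi n N s t0 x \<omega> \<in> stateX n"
      by (rule phi_in_stateX[OF subsetD[OF pb_set_subset_stateX x(1)]])
    ultimately show ?thesis
      by blast
  qed
  then show "z \<in> pb_set n N t \<omega>"
    unfolding pb_set_def[of n N t] by blast
qed

lemma pb_set_if_collapses:
  assumes fin: "locally_finite_jumps n N \<omega>" and "collapses n N lo hi \<omega>" "hi \<le> t"
  obtains c where "pb_set n N t \<omega> = {c}"
    and "\<And>t0. t0 \<le> lo \<Longrightarrow> (\<lambda>x. phi n N t t0 x \<omega>) ` stateX n = {c}"
proof -
  obtain c0 where "lo \<le> hi" and const: "\<forall>x\<in>stateX n. phi n N hi lo x \<omega> = c0"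
    using assms(2) unfolding collapses_def by blast
  let ?c = "phi n N t hi c0 \<omega>"
  have const_t: "phi n N t t0 x \<omega> = ?c" if "t0 \<le> lo" "x \<in> stateX n" for t0 x
    using phi_eq_if_collapses[OF fin const that(1) \<open>lo \<le> hi\<close> \<open>hi \<le> t\<close> that(2)] .
  have image: "(\<lambda>x. phi n N t t0 x \<omega>) ` stateX n = {?c}" if "t0 \<le> lo" for t0
    using const_t[OF that] replicate_in_stateX[of n False] by (auto intro: rev_image_eqI)
  have "?c \<in> (\<lambda>x. phi n N t s x \<omega>) ` stateX n" if "s \<le> t" for s
  proof (cases "s \<le> lo")
    case True
    then show ?thesis using image by simp
  next
    case False
    let ?y = "replicate n False"
    have "?c = phi n N t lo ?y \<omega>"
      using const_t[of lo ?y] replicate_in_stateX by simp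
    also have "\<dots> = phi n N t s (phi n N s lo ?y \<omega>) \<omega>"
      using False that by (intro phi_cocycle[OF fin]) auto
    finally show ?thesis
      by (rule rev_image_eqI[OF phi_in_stateX[OF replicate_in_stateX]])
  qed
  then have "?c \<in> pb_set n N t \<omega>"
    unfolding pb_set_def by simp
  moreover have "pb_set n N t \<omega> \<subseteq> {?c}"
    using pb_set_subset_image[of lo t n N \<omega>] image[of lo] \<open>lo \<le> hi\<close> \<open>hi \<le> t\<close> by simp
  ultimately have "pb_set n N t \<omega> = {?c}"
    by blast
  with image show ?thesis
    using that by blast
qed

section \<open>Measurability\<close>

lemma measurable_filter_count_space:
  assumes "\<And>x. x \<in> set xs \<Longrightarrow> Measurable.pred M (P x)"
  shows "(\<lambda>\<omega>. filter (\<lambda>x. P x \<omega>) xs) \<in> M \<rightarrow>\<^sub>M count_space UNIV"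
  using assms
proof (induction xs)
  case Nil
  then show ?case by simp
next
  case (Cons x xs)
  have IH: "(\<lambda>\<omega>. filter (\<lambda>x. P x \<omega>) xs) \<in> M \<rightarrow>\<^sub>M count_space UNIV"
    using Cons by simp
  have "(\<lambda>\<omega>. if P x \<omega> then x # filter (\<lambda>x. P x \<omega>) xs else filter (\<lambda>x. P x \<omega>) xs)
      \<in> M \<rightarrow>\<^sub>M count_space UNIV"
  proof (rule measurable_If[OF _ IH])
    show "(\<lambda>\<omega>. x # filter (\<lambda>x. P x \<omega>) xs) \<in> M \<rightarrow>\<^sub>M count_space UNIV"
      by (rule measurable_compose[OF IH]) simp
    show "{\<omega> \<in> space M. P x \<omega>} \<in> sets M"
      using Cons.prems by (simp add: pred_def)
  qed
  then show ?case by simp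
qed

lemma measurable_count_space_eventually_eq:
  fixes f :: "'a \<Rightarrow> 'b::countable"
  assumes g: "\<And>L. g L \<in> M \<rightarrow>\<^sub>M count_space UNIV"
    and ev: "\<And>\<omega>. eventually (\<lambda>L. g L \<omega> = f \<omega>) sequentially"
  shows "f \<in> M \<rightarrow>\<^sub>M count_space UNIV"
proof -
  have eq: "f \<omega> = y \<longleftrightarrow> (\<exists>L0. \<forall>L\<ge>L0. g L \<omega> = y)" for \<omega> y
  proof -
    obtain L1 where L1: "\<forall>L\<ge>L1. g L \<omega> = f \<omega>"
      using ev[of \<omega>] by (auto simp: eventually_sequentially)
    show ?thesis
    proof
      assume "\<exists>L0. \<forall>L\<ge>L0. g L \<omega> = y"
      then obtain L0 where "\<forall>L\<ge>L0. g L \<omega> = y" by blast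
      then have "g (max L0 L1) \<omega> = y" by simp
      moreover have "g (max L0 L1) \<omega> = f \<omega>"
        using L1 by simp
      ultimately show "f \<omega> = y" by simp
    next
      assume "f \<omega> = y"
      then show "\<exists>L0. \<forall>L\<ge>L0. g L \<omega> = y"
        using L1 by (intro exI[of _ L1]) simp
    qed
  qed
  have "Measurable.pred M (\<lambda>\<omega>. g L \<omega> = y)" for L y
    using g by measurable
  then have "Measurable.pred M (\<lambda>\<omega>. \<exists>L0. \<forall>L\<ge>L0. g L \<omega> = y)" for y
    by (intro pred_intros_countable) auto
  then have "Measurable.pred M (\<lambda>\<omega>. f \<omega> = y)" for y
    by (subst eq)
  then have "{\<omega> \<in> space M. f \<omega> = y} \<in> sets M" for y
    by (simp only: pred_def)
  then show ?thesis
    unfolding measurable_count_space_eq2_countable by (simp add: vimage_def Int_def conj_commute)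
qed

lemma jump_seq_concat:
  assumes fin: "locally_finite_jumps n N \<omega>" and mono: "\<And>j. j < J \<Longrightarrow> g j \<le> g (Suc j)"
  shows "jump_seq n N \<omega> (g 0) (g J) = concat (map (\<lambda>j. jump_seq n N \<omega> (g j) (g (Suc j))) [0..<J])"
  using mono
proof (induction J)
  case 0
  then show ?case by (simp add: jump_seq_def)
next
  case (Suc J)
  have "g 0 \<le> g J"
    by (rule lift_Suc_mono_le_ivl[of "{..<J}" g]) (use Suc.prems in auto)
  then have "jump_seq n N \<omega> (g 0) (g (Suc J)) = jump_seq n N \<omega> (g 0) (g J) @ jump_seq n N \<omega> (g J) (g (Suc J))"
    using Suc.prems by (intro jump_seq_append[OF fin]) auto
  then show ?case
    using Suc by simp
qed

lemma jump_seq_at_most_one_time: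
  assumes "\<And>u v. u \<in> (\<Union>k\<in>{..n}. N k \<omega> \<inter> {a..<b}) \<Longrightarrow> v \<in> (\<Union>k\<in>{..n}. N k \<omega> \<inter> {a..<b}) \<Longrightarrow> u = v"
  shows "jump_seq n N \<omega> a b = filter (\<lambda>k. N k \<omega> \<inter> {a..<b} \<noteq> {}) [0..<Suc n]"
proof (cases "(\<Union>k\<in>{..n}. N k \<omega> \<inter> {a..<b}) = {}")
  case True
  then have "N k \<omega> \<inter> {a..<b} = {}" if "k \<in> set [0..<Suc n]" for k
  proof -
    have "k \<le> n" using that by (simp only: set_upt) auto
    with True show ?thesis by blast
  qed
  then have "filter (\<lambda>k. N k \<omega> \<inter> {a..<b} \<noteq> {}) [0..<Suc n] = []"
    by (simp only: filter_empty_conv) blast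
  with True show ?thesis
    unfolding jump_seq_def by simp
next
  case False
  then obtain s where s: "s \<in> (\<Union>k\<in>{..n}. N k \<omega> \<inter> {a..<b})"
    by blast
  then have U: "(\<Union>k\<in>{..n}. N k \<omega> \<inter> {a..<b}) = {s}"
    using assms by blast
  have "s \<in> N k \<omega> \<longleftrightarrow> N k \<omega> \<inter> {a..<b} \<noteq> {}" if "k \<le> n" for k
  proof
    assume "N k \<omega> \<inter> {a..<b} \<noteq> {}"
    then obtain u where "u \<in> N k \<omega> \<inter> {a..<b}" by blast
    moreover from this have "u \<in> (\<Union>k\<in>{..n}. N k \<omega> \<inter> {a..<b})"
      using that by blast
    then have "u = s"
      unfolding U by simp
    ultimately show "s \<in> N k \<omega>" by simp
  qed (use s in blast)
  then have "filter (\<lambda>k. s \<in> N k \<omega>) [0..<Suc n] = filter (\<lambda>k. N k \<omega> \<inter> {a..<b} \<noteq> {}) [0..<Suc n]"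
    by (intro filter_cong refl) (simp add: less_Suc_eq_le del: upt_Suc)
  then show ?thesis
    unfolding jump_seq_def U by simp
qed

text \<open>On a grid fine enough to separate the finitely many jump times, \<open>jump_seq\<close> is
  determined by which clocks ring in which cell; this is what makes it measurable.\<close>

definition grid :: "real \<Rightarrow> real \<Rightarrow> nat \<Rightarrow> nat \<Rightarrow> real" where
  "grid a b L j = a + real j * ((b - a) / real (Suc L))"

lemma grid_mono: "a \<le> b \<Longrightarrow> i \<le> j \<Longrightarrow> grid a b L i \<le> grid a b L j"
  unfolding grid_def by (intro add_left_mono mult_right_mono) auto

lemma grid_0 [simp]: "grid a b L 0 = a"
  and grid_last [simp]: "grid a b L (Suc L) = b"
  by (simp_all add: grid_def)

lemma grid_width: "grid a b L (Suc j) - grid a b L j = (b - a) / real (Suc L)"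
  unfolding grid_def by (simp add: distrib_right diff_divide_distrib)

lemma eventually_separated_finite:
  fixes U :: "real set"
  assumes "finite U" and w: "(w \<longlongrightarrow> 0) F"
  shows "\<forall>\<^sub>F L in F. \<forall>u\<in>U. \<forall>v\<in>U. u \<noteq> v \<longrightarrow> w L < \<bar>u - v\<bar>"
proof -
  have sep: "\<forall>\<^sub>F L in F. u \<noteq> v \<longrightarrow> w L < \<bar>u - v\<bar>" for u v
  proof (cases "u = v")
    case False
    then have "0 < \<bar>u - v\<bar>" by simp
    from order_tendstoD(2)[OF w this] show ?thesis
      by (rule eventually_mono) simp
  qed simp
  have sep_u: "\<forall>\<^sub>F L in F. \<forall>v\<in>U. u \<noteq> v \<longrightarrow> w L < \<bar>u - v\<bar>" for u
    by (rule eventually_ball_finite[OF \<open>finite U\<close>]) (use sep in blast)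
  show ?thesis
    by (rule eventually_ball_finite[OF \<open>finite U\<close>]) (use sep_u in blast)
qed

lemma jump_seq_grid:
  assumes fin: "locally_finite_jumps n N \<omega>" and "a < b"
    and sep: "\<forall>u\<in>(\<Union>k\<in>{..n}. N k \<omega> \<inter> {a..<b}). \<forall>v\<in>(\<Union>k\<in>{..n}. N k \<omega> \<inter> {a..<b}).
      u \<noteq> v \<longrightarrow> (b - a) / real (Suc L) < \<bar>u - v\<bar>"
  shows "jump_seq n N \<omega> a b =
    concat (map (\<lambda>j. filter (\<lambda>k. N k \<omega> \<inter> {grid a b L j..<grid a b L (Suc j)} \<noteq> {}) [0..<Suc n])
      [0..<Suc L])"
proof -
  have "jump_seq n N \<omega> a b = jump_seq n N \<omega> (grid a b L 0) (grid a b L (Suc L))"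
    by simp
  also have "\<dots> = concat (map (\<lambda>j. jump_seq n N \<omega> (grid a b L j) (grid a b L (Suc j))) [0..<Suc L])"
    using \<open>a < b\<close> by (intro jump_seq_concat[OF fin, where g = "grid a b L"] grid_mono) auto
  also have "\<dots> = concat (map (\<lambda>j. filter (\<lambda>k. N k \<omega> \<inter> {grid a b L j..<grid a b L (Suc j)} \<noteq> {})
      [0..<Suc n]) [0..<Suc L])"
  proof (intro arg_cong[where f = concat] map_cong refl jump_seq_at_most_one_time)
    fix j u v assume "j \<in> set [0..<Suc L]"
      and uv: "u \<in> (\<Union>k\<in>{..n}. N k \<omega> \<inter> {grid a b L j..<grid a b L (Suc j)})"
        "v \<in> (\<Union>k\<in>{..n}. N k \<omega> \<inter> {grid a b L j..<grid a b L (Suc j)})"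
    then have "{grid a b L j..<grid a b L (Suc j)} \<subseteq> {a..<b}"
      using grid_mono[of a b 0 j L] grid_mono[of a b "Suc j" "Suc L" L] \<open>a < b\<close> by auto
    then have "u \<in> (\<Union>k\<in>{..n}. N k \<omega> \<inter> {a..<b})" "v \<in> (\<Union>k\<in>{..n}. N k \<omega> \<inter> {a..<b})"
      using uv by auto
    moreover have "\<bar>u - v\<bar> < (b - a) / real (Suc L)"
      using uv grid_width[of a b L j] by (auto simp: abs_less_iff)
    ultimately show "u = v"
      using sep by force
  qed
  finally show ?thesis .
qed

lemma jump_seq_eventually_grid:
  assumes fin: "locally_finite_jumps n N \<omega>" and "a < b"
  shows "\<forall>\<^sub>F L in sequentially. jump_seq n N \<omega> a b =
    concat (map (\<lambda>j. filter (\<lambda>k. N k \<omega> \<inter> {grid a b L j..<grid a b L (Suc j)} \<noteq> {}) [0..<Suc n])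
      [0..<Suc L])"
proof -
  have "((\<lambda>L. (b - a) / real (Suc L)) \<longlongrightarrow> 0) sequentially"
    using tendsto_mult_right_zero[OF LIMSEQ_inverse_real_of_nat, of "b - a"]
    by (simp add: divide_inverse)
  from eventually_separated_finite[OF finite_jump_times[OF fin] this] show ?thesis
    by (rule eventually_mono) (rule jump_seq_grid[OF fin \<open>a < b\<close>])
qed

lemma measurable_concat_map_filter:
  assumes "\<And>j k. j \<in> set js \<Longrightarrow> k \<in> set ks \<Longrightarrow> Measurable.pred M (P j k)"
  shows "(\<lambda>\<omega>. concat (map (\<lambda>j. filter (\<lambda>k. P j k \<omega>) ks) js)) \<in> M \<rightarrow>\<^sub>M count_space UNIV"
proof -
  have "concat (map (\<lambda>j. filter (\<lambda>k. P j k \<omega>) ks) js) =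
      map snd (filter (\<lambda>jk. P (fst jk) (snd jk) \<omega>) (List.product js ks))" for \<omega>
    by (induction js) (simp_all add: filter_map comp_def)
  moreover have "(\<lambda>\<omega>. map snd (filter (\<lambda>jk. P (fst jk) (snd jk) \<omega>) (List.product js ks)))
      \<in> M \<rightarrow>\<^sub>M count_space UNIV"
    by (rule measurable_compose[OF measurable_filter_count_space]) (use assms in auto)
  ultimately show ?thesis by simp
qed

lemma measurable_jump_seq:
  assumes fin: "\<And>\<omega>. locally_finite_jumps n N \<omega>"
    and meas: "\<And>k a b. k \<le> n \<Longrightarrow> Measurable.pred M (\<lambda>\<omega>. N k \<omega> \<inter> {a..<b} \<noteq> {})"
  shows "(\<lambda>\<omega>. jump_seq n N \<omega> a b) \<in> M \<rightarrow>\<^sub>M count_space UNIV"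
proof (cases "a < b")
  case False
  then show ?thesis by (simp add: jump_seq_def)
next
  case True
  let ?g = "\<lambda>L \<omega>. concat (map (\<lambda>j. filter (\<lambda>k. N k \<omega> \<inter> {grid a b L j..<grid a b L (Suc j)} \<noteq> {})
    [0..<Suc n]) [0..<Suc L])"
  show ?thesis
  proof (rule measurable_count_space_eventually_eq[where g = ?g])
    show "?g L \<in> M \<rightarrow>\<^sub>M count_space UNIV" for L
      using meas by (intro measurable_concat_map_filter) auto
    show "\<forall>\<^sub>F L in sequentially. ?g L \<omega> = jump_seq n N \<omega> a b" for \<omega>
      using jump_seq_eventually_grid[OF fin True] by (rule eventually_mono) (rule sym)
  qed
qed

lemma measurable_phi:
  assumes "\<And>\<omega>. locally_finite_jumps n N \<omega>"
    and "\<And>k a b. k \<le> n \<Longrightarrow> Measurable.pred M (\<lambda>\<omega>. N k \<omega> \<inter> {a..<b} \<noteq> {})"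
  shows "(\<lambda>\<omega>. phi n N t t0 x \<omega>) \<in> M \<rightarrow>\<^sub>M count_space UNIV"
  unfolding phi_def
  by (rule measurable_compose[OF measurable_jump_seq[OF assms] measurable_count_space])

lemma exists_rat_no_jumps_before:
  assumes fin: "locally_finite_jumps n N \<omega>"
  shows "\<exists>q\<in>\<rat>. q \<le> t0 \<and> (\<forall>k\<le>n. N k \<omega> \<inter> {q..<t0} = {})"
proof -
  let ?S = "insert (t0 - 1) (\<Union>k\<in>{..n}. N k \<omega> \<inter> {t0 - 1..<t0})"
  have "finite ?S"
    using finite_jump_times[OF fin] by simp
  then have "Max ?S < t0"
    by (subst Max_less_iff) auto
  then obtain q where q: "q \<in> \<rat>" "Max ?S < q" "q < t0"
    using Rats_dense_in_real by blast
  have "N k \<omega> \<inter> {q..<t0} = {}" if "k \<le> n" for k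
  proof -
    have "u \<notin> N k \<omega>" if "q \<le> u" "u < t0" for u
    proof
      assume "u \<in> N k \<omega>"
      moreover have "t0 - 1 < u"
        using Max_ge[OF \<open>finite ?S\<close>, of "t0 - 1"] q(2) that(1) by simp
      ultimately have "u \<in> ?S"
        using \<open>k \<le> n\<close> that(2) by auto
      then show False
        using Max_ge[OF \<open>finite ?S\<close>, of u] q(2) that(1) by simp
    qed
    then show ?thesis by auto
  qed
  then show ?thesis
    using q by (intro bexI[of _ q]) auto
qed

lemma pb_set_eq_Inter_rat:
  assumes fin: "locally_finite_jumps n N \<omega>"
  shows "pb_set n N t \<omega> = (\<Inter>r\<in>{r. of_rat r \<le> t}. (\<lambda>x. phi n N t (of_rat r) x \<omega>) ` stateX n)"
proof
  show "pb_set n N t \<omega> \<subseteq> (\<Inter>r\<in>{r. of_rat r \<le> t}. (\<lambda>x. phi n N t (of_rat r) x \<omega>) ` stateX n)"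
    unfolding pb_set_def by auto
next
  have "(\<Inter>r\<in>{r. of_rat r \<le> t}. (\<lambda>x. phi n N t (of_rat r) x \<omega>) ` stateX n)
      \<subseteq> (\<lambda>x. phi n N t t0 x \<omega>) ` stateX n" if "t0 \<le> t" for t0
  proof -
    obtain q where q: "q \<in> \<rat>" "q \<le> t0" "\<forall>k\<le>n. N k \<omega> \<inter> {q..<t0} = {}"
      using exists_rat_no_jumps_before[OF fin] by blast
    then obtain r where r: "q = of_rat r"
      using Rats_cases by blast
    have "phi n N t q y \<omega> = phi n N t t0 y \<omega>" for y
      using phi_cocycle[OF fin \<open>q \<le> t0\<close> \<open>t0 \<le> t\<close>] phi_no_jumps[of n N \<omega> q t0] q(3) by simp
    then have "(\<lambda>x. phi n N t (of_rat r) x \<omega>) ` stateX n = (\<lambda>x. phi n N t t0 x \<omega>) ` stateX n"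
      unfolding r[symmetric] by simp
    moreover have "of_rat r \<le> t"
      using q(2) r that by simp
    ultimately show ?thesis by blast
  qed
  then show "(\<Inter>r\<in>{r. of_rat r \<le> t}. (\<lambda>x. phi n N t (of_rat r) x \<omega>) ` stateX n) \<subseteq> pb_set n N t \<omega>"
    unfolding pb_set_def by blast
qed

lemma pb_set_measurable:
  assumes fin: "\<And>\<omega>. locally_finite_jumps n N \<omega>"
    and meas: "\<And>k a b. k \<le> n \<Longrightarrow> Measurable.pred M (\<lambda>\<omega>. N k \<omega> \<inter> {a..<b} \<noteq> {})"
  shows "{\<omega> \<in> space M. x \<in> pb_set n N t \<omega>} \<in> sets M"
proof -
  note [measurable] = measurable_phi[OF fin meas]
  have "Measurable.pred M (\<lambda>\<omega>. \<forall>r::rat. of_rat r \<le> t \<longrightarrow> (\<exists>y\<in>stateX n. phi n N t (of_rat r) y \<omega> = x))"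
    by measurable
  then show ?thesis
    by (simp add: pred_def pb_set_eq_Inter_rat[OF fin] image_iff eq_commute)
qed

lemma Gamma_measurable:
  assumes "\<And>\<omega>. locally_finite_jumps n N \<omega>"
    and "\<And>k a b. k \<le> n \<Longrightarrow> Measurable.pred M (\<lambda>\<omega>. N k \<omega> \<inter> {a..<b} \<noteq> {})"
  shows "Gamma M n N t t0 \<in> sets M"
proof -
  note [measurable] = measurable_phi[OF assms]
  have "Measurable.pred M (\<lambda>\<omega>. \<forall>x1\<in>stateX n. \<forall>x2\<in>stateX n. phi n N t t0 x1 \<omega> = phi n N t t0 x2 \<omega>)"
    by measurable
  then show ?thesis
    unfolding Gamma_def by (simp add: pred_def)
qed

section \<open>Independent blocks of Poisson clocks\<close>

lemma (in prob_space) prob_all_in_eq_prod: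
  assumes ind: "indep_vars M' X I" and "J \<subseteq> I" "finite J"
    and A: "\<And>i. i \<in> J \<Longrightarrow> A i \<in> sets (M' i)"
  shows "prob {\<omega> \<in> space M. \<forall>i\<in>J. X i \<omega> \<in> A i} = (\<Prod>i\<in>J. prob {\<omega> \<in> space M. X i \<omega> \<in> A i})"
proof (cases "J = {}")
  case True
  then show ?thesis by (simp add: prob_space)
next
  case False
  have "{\<omega> \<in> space M. \<forall>i\<in>J. X i \<omega> \<in> A i} = (\<Inter>i\<in>J. X i -` A i \<inter> space M)"
    using False by auto
  moreover have "{\<omega> \<in> space M. X i \<omega> \<in> A i} = X i -` A i \<inter> space M" for i
    by auto
  ultimately show ?thesis
    using indep_varsD[OF ind False assms(3,2) A] by simp
qed

lemma (in prob_space) indep_vars_block_events: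
  assumes ind: "indep_vars M' X I" and A: "\<And>i. i \<in> I \<Longrightarrow> A i \<in> sets (M' i)"
    and J: "\<And>b. b \<in> B \<Longrightarrow> J b \<subseteq> I" "\<And>b. b \<in> B \<Longrightarrow> finite (J b)" "disjoint_family_on J B"
  shows "indep_vars (\<lambda>_. count_space UNIV) (\<lambda>b \<omega>. \<forall>i\<in>J b. X i \<omega> \<in> A i) B"
proof -
  have "Measurable.pred (Pi\<^sub>M (J b) M') (\<lambda>f. \<forall>i\<in>J b. f i \<in> A i)" if "b \<in> B" for b
    using J(1,2) A that
    by (intro pred_intros_finite(3) pred_sets2[OF _ measurable_component_singleton]) auto
  then have "indep_vars (\<lambda>_. count_space UNIV) (\<lambda>b \<omega>. \<forall>i\<in>J b. restrict (\<lambda>i. X i \<omega>) (J b) i \<in> A i) B"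
    by (intro indep_vars_compose2[OF indep_vars_restrict[OF ind J(1,3)]])
  then show ?thesis
    by simp
qed

lemma (in prob_space) prob_all_blocks_fail_le:
  assumes ind: "indep_vars M' X I" and A: "\<And>i. i \<in> I \<Longrightarrow> A i \<in> sets (M' i)"
    and J: "\<And>b. b \<in> B \<Longrightarrow> J b \<subseteq> I" "\<And>b. b \<in> B \<Longrightarrow> finite (J b)"
      "\<And>b. b \<in> B \<Longrightarrow> card (J b) = c" "disjoint_family_on J B" "finite B"
    and p: "0 \<le> p" "\<And>i. i \<in> I \<Longrightarrow> p \<le> prob {\<omega> \<in> space M. X i \<omega> \<in> A i}"
  shows "prob {\<omega> \<in> space M. \<forall>b\<in>B. \<not> (\<forall>i\<in>J b. X i \<omega> \<in> A i)} \<le> (1 - p ^ c) ^ card B"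
proof -
  define Y where "Y = (\<lambda>b \<omega>. \<forall>i\<in>J b. X i \<omega> \<in> A i)"
  have indY: "indep_vars (\<lambda>_. count_space UNIV) Y B"
    unfolding Y_def by (rule indep_vars_block_events[OF ind A J(1,2,4)])
  have "prob {\<omega> \<in> space M. Y b \<omega> \<in> {False}} \<le> 1 - p ^ c" if "b \<in> B" for b
  proof -
    have "p ^ c = (\<Prod>i\<in>J b. p)"
      using J(3)[OF that] by simp
    also have "\<dots> \<le> (\<Prod>i\<in>J b. prob {\<omega> \<in> space M. X i \<omega> \<in> A i})"
      using J(1)[OF that] p by (intro prod_mono) auto
    also have "\<dots> = prob {\<omega> \<in> space M. Y b \<omega>}"
      unfolding Y_def using J(1,2)[OF that] A
      by (intro prob_all_in_eq_prod[OF ind, symmetric]) auto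
    also have "\<dots> = 1 - prob {\<omega> \<in> space M. Y b \<omega> \<in> {False}}"
    proof -
      have "{\<omega> \<in> space M. Y b \<omega> \<in> {False}} = space M - {\<omega> \<in> space M. Y b \<omega>}"
        by auto
      moreover have "{\<omega> \<in> space M. Y b \<omega>} \<in> events"
        using indY that by (auto simp: indep_vars_def pred_def)
      ultimately show ?thesis
        using prob_compl by simp
    qed
    finally show ?thesis by simp
  qed
  then have "(\<Prod>b\<in>B. prob {\<omega> \<in> space M. Y b \<omega> \<in> {False}}) \<le> (\<Prod>b\<in>B. 1 - p ^ c)"
    by (intro prod_mono) auto
  moreover have "prob {\<omega> \<in> space M. \<forall>b\<in>B. Y b \<omega> \<in> {False}} = (\<Prod>b\<in>B. prob {\<omega> \<in> space M. Y b \<omega> \<in> {False}})"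
    by (rule prob_all_in_eq_prod[OF indY order_refl \<open>finite B\<close>]) simp
  ultimately show ?thesis
    by (simp add: Y_def)
qed

definition bounded_rates_partition ::
  "nat \<Rightarrow> (nat \<Rightarrow> real \<Rightarrow> real) \<Rightarrow> real \<Rightarrow> real \<Rightarrow> nat \<Rightarrow> (nat \<Rightarrow> real) \<Rightarrow> bool" where
  "bounded_rates_partition n lam r R m q \<longleftrightarrow>
     (\<forall>i<m. q i < q (Suc i) \<and>
        (\<forall>k\<le>n. r \<le> integral {q i..q (Suc i)} (lam k) \<and> integral {q i..q (Suc i)} (lam k) \<le> R))"

lemma joint_bounded_rates_iff:
  "joint_bounded_rates n lam r R m \<tau>1 \<tau>2 \<longleftrightarrow>
     (\<exists>q. q 0 = \<tau>1 \<and> q m = \<tau>2 \<and> bounded_rates_partition n lam r R m q)"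
  unfolding joint_bounded_rates_def bounded_rates_partition_def by blast

lemma indep_poisson_procsD:
  assumes "indep_poisson_procs M n lam N"
  shows "prob_space M"
    and "locally_finite_jumps n N \<omega>"
    and "k \<le> n \<Longrightarrow> Measurable.pred M (\<lambda>\<omega>. N k \<omega> \<inter> {a..<b} \<noteq> {})"
proof -
  show "prob_space M"
    using assms by (simp add: indep_poisson_procs_def)
  show fin: "locally_finite_jumps n N \<omega>" for \<omega>
    using assms by (simp add: indep_poisson_procs_def locally_finite_jumps_def)
  assume "k \<le> n"
  show "Measurable.pred M (\<lambda>\<omega>. N k \<omega> \<inter> {a..<b} \<noteq> {})"
  proof (cases "a \<le> b")
    case True
    have "(\<lambda>\<omega>. card (N k \<omega> \<inter> {a..<b})) \<in> M \<rightarrow>\<^sub>M count_space UNIV"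
      using assms \<open>k \<le> n\<close> True by (simp add: indep_poisson_procs_def)
    then have "Measurable.pred M (\<lambda>\<omega>. card (N k \<omega> \<inter> {a..<b}) \<noteq> 0)"
      by measurable
    moreover have "finite (N k \<omega> \<inter> {a..<b})" for \<omega>
      using fin[of \<omega>] \<open>k \<le> n\<close> unfolding locally_finite_jumps_def
      by (auto intro: finite_subset[of _ "N k \<omega> \<inter> {a..b}"])
    ultimately show ?thesis by simp
  qed simp
qed

lemma prob_card_jumps_in:
  assumes "indep_poisson_procs M n lam N" "k \<le> n" "a \<le> b"
  shows "measure M {\<omega> \<in> space M. card (N k \<omega> \<inter> {a..<b}) \<in> S}
    = measure_pmf.prob (poisson_law (integral {a..b} (lam k))) S"
proof -
  let ?X = "\<lambda>\<omega>. card (N k \<omega> \<inter> {a..<b})"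
  have X: "?X \<in> M \<rightarrow>\<^sub>M count_space UNIV"
    and law: "distr M (count_space UNIV) ?X = measure_pmf (poisson_law (integral {a..b} (lam k)))"
    using assms by (simp_all add: indep_poisson_procs_def)
  have "measure M {\<omega> \<in> space M. ?X \<omega> \<in> S} = measure (distr M (count_space UNIV) ?X) S"
    by (subst measure_distr[OF X]) (auto intro: arg_cong[where f = "measure M"])
  then show ?thesis
    unfolding law .
qed

lemma prob_poisson_law_0:
  assumes "0 < mu"
  shows "measure_pmf.prob (poisson_law mu) {0} = exp (- mu)"
  using assms by (simp add: poisson_law_def measure_pmf_single)

lemma prob_poisson_law_pos:
  assumes "0 < mu"
  shows "measure_pmf.prob (poisson_law mu) {c. 0 < c} = 1 - exp (- mu)"
proof -
  have "{c::nat. 0 < c} = space (measure_pmf (poisson_law mu)) - {0}"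
    by auto
  then show ?thesis
    using measure_pmf.prob_compl[of "{0}" "poisson_law mu"] prob_poisson_law_0[OF assms] by simp
qed

definition cell_prob_bound :: "real \<Rightarrow> real \<Rightarrow> real" where
  "cell_prob_bound r R = min (1 - exp (- r)) (exp (- R))"

lemma cell_prob_bound_pos: "0 < r \<Longrightarrow> 0 < cell_prob_bound r R"
  by (simp add: cell_prob_bound_def)

lemma cell_prob_bound_le_1: "cell_prob_bound r R \<le> 1"
  by (simp add: cell_prob_bound_def min_le_iff_disj)

lemma prob_cell_event_ge:
  assumes procs: "indep_poisson_procs M n lam N" and "k \<le> n" "a \<le> b" "0 < r"
    and "r \<le> integral {a..b} (lam k)" "integral {a..b} (lam k) \<le> R"
  shows "cell_prob_bound r R \<le>
    measure M {\<omega> \<in> space M. card (N k \<omega> \<inter> {a..<b}) \<in> (if P then {c. 0 < c} else {0})}"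
proof -
  let ?mu = "integral {a..b} (lam k)"
  have "0 < ?mu" using assms by linarith
  show ?thesis
  proof (cases P)
    case True
    have "exp (- ?mu) \<le> exp (- r)" using assms by simp
    then show ?thesis
      using True prob_card_jumps_in[OF procs \<open>k \<le> n\<close> \<open>a \<le> b\<close>, of "{c. 0 < c}"] prob_poisson_law_pos[OF \<open>0 < ?mu\<close>]
      by (simp add: cell_prob_bound_def min_le_iff_disj)
  next
    case False
    have "exp (- R) \<le> exp (- ?mu)" using assms by simp
    then show ?thesis
      using False prob_card_jumps_in[OF procs \<open>k \<le> n\<close> \<open>a \<le> b\<close>, of "{0}"] prob_poisson_law_0[OF \<open>0 < ?mu\<close>]
      by (simp add: cell_prob_bound_def min_le_iff_disj)
  qed
qed

lemma partition_cells_disjoint: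
  fixes Q :: "'b \<Rightarrow> nat \<Rightarrow> real"
  assumes disj: "disjoint_family_on (\<lambda>b. {Q b 0..<Q b m}) B" and "b \<in> B" "b' \<in> B"
    and mono: "\<And>b i. b \<in> B \<Longrightarrow> i < m \<Longrightarrow> Q b i \<le> Q b (Suc i)"
    and "i < m" "i' < m" "(b, i) \<noteq> (b', i')"
  shows "{Q b i..<Q b (Suc i)} \<inter> {Q b' i'..<Q b' (Suc i')} = {}"
proof -
  have le: "Q c j \<le> Q c j'" if "c \<in> B" "j \<le> j'" "j' \<le> m" for c j j'
    by (rule lift_Suc_mono_le_ivl[of "{..<m}" "Q c"]) (use mono that in auto)
  show ?thesis
  proof (cases "b = b'")
    case True
    then have "i \<noteq> i'"
      using \<open>(b, i) \<noteq> (b', i')\<close> by simp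
    then consider "Suc i \<le> i'" | "Suc i' \<le> i"
      by linarith
    then have "Q b (Suc i) \<le> Q b i' \<or> Q b (Suc i') \<le> Q b i"
      by cases (use le[of b] \<open>b \<in> B\<close> assms(5,6) in simp_all)
    then show ?thesis
      using True by auto
  next
    case False
    then have "{Q b 0..<Q b m} \<inter> {Q b' 0..<Q b' m} = {}"
      using disj \<open>b \<in> B\<close> \<open>b' \<in> B\<close> by (auto simp: disjoint_family_on_def)
    moreover have "{Q c j..<Q c (Suc j)} \<subseteq> {Q c 0..<Q c m}" if "c \<in> B" "j < m" for c j
      using le[of c 0 j] le[of c "Suc j" m] that by auto
    then have "{Q b i..<Q b (Suc i)} \<subseteq> {Q b 0..<Q b m}" "{Q b' i'..<Q b' (Suc i')} \<subseteq> {Q b' 0..<Q b' m}"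
      using \<open>b \<in> B\<close> \<open>b' \<in> B\<close> assms(5,6) by simp_all
    ultimately show ?thesis
      by blast
  qed
qed

lemma pred_spells_word:
  assumes meas: "\<And>k a b. k \<le> n \<Longrightarrow> Measurable.pred M (\<lambda>\<omega>. N k \<omega> \<inter> {a..<b} \<noteq> {})"
  shows "Measurable.pred M (spells_word n N L q)"
proof -
  have "Measurable.pred M (\<lambda>\<omega>. k \<le> n \<longrightarrow> (N k \<omega> \<inter> {q i..<q (Suc i)} \<noteq> {} \<longleftrightarrow> k = L ! i))" for i k
  proof (cases "k \<le> n")
    case True
    note [measurable] = meas[OF True, of "q i" "q (Suc i)"]
    show ?thesis by measurable
  qed simp
  then have "Measurable.pred M (\<lambda>\<omega>. \<forall>k\<le>n. N k \<omega> \<inter> {q i..<q (Suc i)} \<noteq> {} \<longleftrightarrow> k = L ! i)" for i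
    by (rule pred_intros_countable(1))
  then have "Measurable.pred M (\<lambda>\<omega>. i < length L \<longrightarrow>
      (\<forall>k\<le>n. N k \<omega> \<inter> {q i..<q (Suc i)} \<noteq> {} \<longleftrightarrow> k = L ! i))" for i
  proof (cases "i < length L")
    case False
    show ?thesis
      by (simp only: False simp_thms) (rule measurable_const, simp)
  qed (simp only: simp_thms)
  then show ?thesis
    unfolding spells_word_def by (rule pred_intros_countable(1))
qed

lemma spells_word_iff_card:
  assumes "locally_finite_jumps n N \<omega>"
  shows "spells_word n N L q \<omega> \<longleftrightarrow> (\<forall>i<length L. \<forall>k\<le>n.
    card (N k \<omega> \<inter> {q i..<q (Suc i)}) \<in> (if k = L ! i then {c. 0 < c} else {0}))"
proof -
  have "finite (N k \<omega> \<inter> {q i..<q (Suc i)})" if "k \<le> n" for i k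
    using assms that unfolding locally_finite_jumps_def
    by (auto intro: finite_subset[of _ "N k \<omega> \<inter> {q i..q (Suc i)}"])
  then have "(N k \<omega> \<inter> {q i..<q (Suc i)} \<noteq> {} \<longleftrightarrow> k = L ! i) \<longleftrightarrow>
      card (N k \<omega> \<inter> {q i..<q (Suc i)}) \<in> (if k = L ! i then {c. 0 < c} else {0})" if "k \<le> n" for i k
    using that by (cases "k = L ! i") (auto simp: card_gt_0_iff)
  then show ?thesis
    by (simp add: spells_word_def)
qed

text \<open>The cell \<open>i\<close> of block \<open>b\<close> observed at site \<open>k\<close> gets the index \<open>to_nat (b, i, k)\<close>,
  since \<open>indep_poisson_procs\<close> only speaks about families indexed by \<open>nat\<close>.\<close>

definition cell_count :: "(nat \<Rightarrow> 'w \<Rightarrow> real set) \<Rightarrow> (nat \<Rightarrow> nat \<Rightarrow> real) \<Rightarrow> nat \<Rightarrow> 'w \<Rightarrow> nat" where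
  "cell_count N Q j \<omega> = (case from_nat j of (b, i, k) \<Rightarrow> card (N k \<omega> \<inter> {Q b i..<Q b (Suc i)}))"

definition cell_pattern :: "nat list \<Rightarrow> nat \<Rightarrow> nat set" where
  "cell_pattern L j = (case from_nat j of (b::nat, i, k) \<Rightarrow> if k = L ! i then {c. 0 < c} else {0})"

lemma cell_count_to_nat [simp]:
  "cell_count N Q (to_nat (b, i, k)) \<omega> = card (N k \<omega> \<inter> {Q b i..<Q b (Suc i)})"
  by (simp add: cell_count_def)

lemma cell_pattern_to_nat [simp]:
  "cell_pattern L (to_nat (b::nat, i, k)) = (if k = L ! i then {c. 0 < c} else {0})"
  by (simp add: cell_pattern_def)

lemma indep_cell_counts:
  assumes procs: "indep_poisson_procs M n lam N" and "finite B"
    and mono: "\<And>b i. b \<in> B \<Longrightarrow> i < m \<Longrightarrow> Q b i \<le> Q b (Suc i)"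
    and disj: "disjoint_family_on (\<lambda>b. {Q b 0..<Q b m}) B"
  shows "prob_space.indep_vars M (\<lambda>_. count_space UNIV) (cell_count N Q) (to_nat ` (B \<times> {..<m} \<times> {..n}))"
proof -
  let ?I = "to_nat ` (B \<times> {..<m} \<times> {..n})"
  define kk where "kk j = snd (snd (from_nat j :: nat \<times> nat \<times> nat))" for j
  define aa where "aa j = (case from_nat j of (b, i, k::nat) \<Rightarrow> Q b i)" for j
  define bb where "bb j = (case from_nat j of (b, i, k::nat) \<Rightarrow> Q b (Suc i))" for j
  have procs_indep: "\<forall>(I::nat set) kk aa bb. finite I \<and> (\<forall>i\<in>I. kk i \<le> n \<and> aa i \<le> bb i) \<and>
      (\<forall>i\<in>I. \<forall>j\<in>I. i \<noteq> j \<longrightarrow> kk i \<noteq> kk j \<or> {aa i..<bb i} \<inter> {aa j..<bb j} = {}) \<longrightarrow>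
      prob_space.indep_vars M (\<lambda>_. count_space UNIV) (\<lambda>i \<omega>. card (N (kk i) \<omega> \<inter> {aa i..<bb i})) I"
    using procs unfolding indep_poisson_procs_def by (elim conjE) assumption
  have "\<forall>j\<in>?I. kk j \<le> n \<and> aa j \<le> bb j"
    using mono by (auto simp: kk_def aa_def bb_def)
  moreover have "kk j \<noteq> kk j' \<or> {aa j..<bb j} \<inter> {aa j'..<bb j'} = {}"
    if jI: "j \<in> ?I" "j' \<in> ?I" "j \<noteq> j'" for j j'
  proof -
    obtain b i k b' i' k' where bik: "b \<in> B" "i < m" "k \<le> n" "j = to_nat (b, i, k)"
      and bik': "b' \<in> B" "i' < m" "k' \<le> n" "j' = to_nat (b', i', k')"
      using jI(1,2) by auto
    then consider "k \<noteq> k'" | "(b, i) \<noteq> (b', i')"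
      using \<open>j \<noteq> j'\<close> by auto
    then show ?thesis
    proof cases
      case 2
      have "{Q b i..<Q b (Suc i)} \<inter> {Q b' i'..<Q b' (Suc i')} = {}"
        using partition_cells_disjoint[where Q = Q and m = m and B = B] disj bik bik' mono 2
        by blast
      then show ?thesis using bik bik' by (simp add: aa_def bb_def)
    qed (use bik bik' in \<open>simp add: kk_def\<close>)
  qed
  ultimately have "prob_space.indep_vars M (\<lambda>_. count_space UNIV)
      (\<lambda>j \<omega>. card (N (kk j) \<omega> \<inter> {aa j..<bb j})) ?I"
    using \<open>finite B\<close> by (intro procs_indep[rule_format] conjI) auto
  moreover have "card (N (kk j) \<omega> \<inter> {aa j..<bb j}) = cell_count N Q j \<omega>" for j \<omega>
    unfolding kk_def aa_def bb_def cell_count_def by (cases "from_nat j :: nat \<times> nat \<times> nat") simp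
  ultimately show ?thesis
    by simp
qed

lemma spells_word_iff_cell_counts:
  assumes "locally_finite_jumps n N \<omega>"
  shows "spells_word n N L (Q b) \<omega> \<longleftrightarrow>
    (\<forall>j\<in>to_nat ` ({b} \<times> {..<length L} \<times> {..n}). cell_count N Q j \<omega> \<in> cell_pattern L j)"
  unfolding spells_word_iff_card[OF assms] by auto

lemma prob_cell_pattern_ge:
  assumes procs: "indep_poisson_procs M n lam N" and "0 < r"
    and Q: "\<And>b. b \<in> B \<Longrightarrow> bounded_rates_partition n lam r R m (Q b)"
    and "j \<in> to_nat ` (B \<times> {..<m} \<times> {..n})"
  shows "cell_prob_bound r R \<le> measure M {\<omega> \<in> space M. cell_count N Q j \<omega> \<in> cell_pattern L j}"
proof -
  obtain b i k where "b \<in> B" "i < m" "k \<le> n" and j: "j = to_nat (b, i, k)"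
    using assms(4) by blast
  then have "Q b i < Q b (Suc i)" "r \<le> integral {Q b i..Q b (Suc i)} (lam k)"
    "integral {Q b i..Q b (Suc i)} (lam k) \<le> R"
    using Q by (auto simp: bounded_rates_partition_def)
  then show ?thesis
    using prob_cell_event_ge[OF procs \<open>k \<le> n\<close> _ \<open>0 < r\<close>, of "Q b i" "Q b (Suc i)" R "k = L ! i"]
    by (simp add: j)
qed

lemma prob_no_block_spells_le:
  fixes B :: "nat set"
  assumes procs: "indep_poisson_procs M n lam N" and "0 < r" and L: "set L \<subseteq> {..n}"
    and Q: "\<And>b. b \<in> B \<Longrightarrow> bounded_rates_partition n lam r R (length L) (Q b)"
    and disj: "disjoint_family_on (\<lambda>b. {Q b 0..<Q b (length L)}) B" and "finite B"
  shows "measure M {\<omega> \<in> space M. \<forall>b\<in>B. \<not> spells_word n N L (Q b) \<omega>}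
    \<le> (1 - cell_prob_bound r R ^ (length L * Suc n)) ^ card B"
proof -
  interpret prob_space M
    by (rule indep_poisson_procsD(1)[OF procs])
  let ?J = "\<lambda>b. to_nat ` ({b} \<times> {..<length L} \<times> {..n})"
  have "indep_vars (\<lambda>_. count_space UNIV) (cell_count N Q) (to_nat ` (B \<times> {..<length L} \<times> {..n}))"
    by (rule indep_cell_counts[OF procs \<open>finite B\<close> _ disj])
      (use Q in \<open>auto simp: bounded_rates_partition_def less_imp_le\<close>)
  moreover have "cell_prob_bound r R \<le> prob {\<omega> \<in> space M. cell_count N Q j \<omega> \<in> cell_pattern L j}"
    if "j \<in> to_nat ` (B \<times> {..<length L} \<times> {..n})" for j
    by (rule prob_cell_pattern_ge[OF procs \<open>0 < r\<close> Q that])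
  ultimately have "prob {\<omega> \<in> space M. \<forall>b\<in>B. \<not> (\<forall>j\<in>?J b. cell_count N Q j \<omega> \<in> cell_pattern L j)}
      \<le> (1 - cell_prob_bound r R ^ (length L * Suc n)) ^ card B"
    using cell_prob_bound_pos[OF \<open>0 < r\<close>, of R] \<open>finite B\<close>
    by (intro prob_all_blocks_fail_le)
      (auto simp: card_image inj_on_def card_cartesian_product disjoint_family_on_def)
  then show ?thesis
    by (simp add: spells_word_iff_cell_counts[OF indep_poisson_procsD(2)[OF procs]])
qed

lemma AE_some_block_spells:
  fixes Q :: "nat \<Rightarrow> nat \<Rightarrow> real"
  assumes procs: "indep_poisson_procs M n lam N" and "0 < r" and L: "set L \<subseteq> {..n}"
    and Q: "\<And>b. bounded_rates_partition n lam r R (length L) (Q b)"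
    and disj: "disjoint_family (\<lambda>b. {Q b 0..<Q b (length L)})"
  shows "AE \<omega> in M. \<exists>b. spells_word n N L (Q b) \<omega>"
proof -
  interpret prob_space M
    by (rule indep_poisson_procsD(1)[OF procs])
  let ?q = "1 - cell_prob_bound r R ^ (length L * Suc n)"
  let ?Z = "{\<omega> \<in> space M. \<forall>b. \<not> spells_word n N L (Q b) \<omega>}"
  have q: "0 \<le> ?q" "?q < 1"
    using cell_prob_bound_pos[OF \<open>0 < r\<close>, of R] cell_prob_bound_le_1[of r R]
    by (simp_all add: power_le_one)
  have [measurable]: "Measurable.pred M (spells_word n N L (Q b))" for b
    by (rule pred_spells_word[OF indep_poisson_procsD(3)[OF procs]])
  have "prob ?Z \<le> ?q ^ K" for K
  proof -
    have "prob ?Z \<le> prob {\<omega> \<in> space M. \<forall>b\<in>{..<K}. \<not> spells_word n N L (Q b) \<omega>}"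
      by (rule finite_measure_mono) (auto, measurable)
    also have "\<dots> \<le> ?q ^ card {..<K}"
      using disjoint_family_on_mono[OF subset_UNIV disj]
      by (intro prob_no_block_spells_le[OF procs \<open>0 < r\<close> L Q]) simp_all
    finally show ?thesis by simp
  qed
  then have "prob ?Z \<le> 0"
    using LIMSEQ_power_zero[of ?q] q by (intro LIMSEQ_le_const) auto
  then have "?Z \<in> null_sets M"
    by (intro null_setsI) (auto simp: emeasure_eq_measure intro: antisym)
  then show ?thesis
    by (rule AE_I') auto
qed

section \<open>Attractors\<close>

lemma hdist_singleton [simp]: "hdist {c} {c} = 0"
  by (simp add: hdist_def)

lemma hdist_eq_0_if_collapses:
  assumes "locally_finite_jumps n N \<omega>" "collapses n N lo hi \<omega>" "t0 \<le> lo" "hi \<le> t"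
  shows "hdist ((\<lambda>x. phi n N t t0 x \<omega>) ` stateX n) (pb_set n N t \<omega>) = 0"
proof (rule pb_set_if_collapses[OF assms(1,2,4)])
  fix c assume "pb_set n N t \<omega> = {c}"
    and "\<And>t0. t0 \<le> lo \<Longrightarrow> (\<lambda>x. phi n N t t0 x \<omega>) ` stateX n = {c}"
  then show ?thesis
    using assms(3) by simp
qed

lemma random_invariant_family_pb_set:
  assumes procs: "indep_poisson_procs M n lam N"
    and single: "\<And>t. AE \<omega> in M. \<exists>c. pb_set n N t \<omega> = {c}"
  shows "random_invariant_family (stateX n) (phi n N) M (pb_set n N)"
proof -
  note fin = indep_poisson_procsD(2)[OF procs]
  have "pb_set n N t \<omega> \<subseteq> stateX n \<and> compactin (discrete_topology (stateX n)) (pb_set n N t \<omega>)" for t \<omega>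
  proof
    show sub: "pb_set n N t \<omega> \<subseteq> stateX n"
      by (rule pb_set_subset_stateX)
    show "compactin (discrete_topology (stateX n)) (pb_set n N t \<omega>)"
      by (rule finite_imp_compactin) (use sub finite_subset[OF sub finite_stateX] in simp_all)
  qed
  moreover have "{(x, \<omega>). x \<in> stateX n \<and> \<omega> \<in> space M \<and> x \<in> pb_set n N t \<omega>}
      \<in> sets (count_space (stateX n) \<Otimes>\<^sub>M M)" for t
  proof -
    have "{(x, \<omega>). x \<in> stateX n \<and> \<omega> \<in> space M \<and> x \<in> pb_set n N t \<omega>} =
        (\<Union>x\<in>stateX n. {x} \<times> {\<omega> \<in> space M. x \<in> pb_set n N t \<omega>})"
      by auto
    moreover have "{x} \<times> {\<omega> \<in> space M. x \<in> pb_set n N t \<omega>} \<in> sets (count_space (stateX n) \<Otimes>\<^sub>M M)"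
      if "x \<in> stateX n" for x
      using that pb_set_measurable[OF fin indep_poisson_procsD(3)[OF procs]] by (intro pair_measureI) auto
    ultimately show ?thesis
      using finite_stateX by (simp add: sets.finite_UN)
  qed
  moreover have "AE \<omega> in M. (\<lambda>x. phi n N t t0 x \<omega>) ` pb_set n N t0 \<omega> = pb_set n N t \<omega>"
    if "t0 \<le> t" for t0 t
    using single[of t0] single[of t]
  proof eventually_elim
    case (elim \<omega>)
    then obtain a c where "pb_set n N t0 \<omega> = {a}" "pb_set n N t \<omega> = {c}"
      by blast
    with image_pb_set_subset[OF fin that, of \<omega>] show ?case
      by simp
  qed
  ultimately show ?thesis
    unfolding random_invariant_family_def by (intro conjI allI impI) simp_all
qed

lemma disjoint_family_decseq_intervals:
  fixes s :: "nat \<Rightarrow> real"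
  assumes "decseq s"
  shows "disjoint_family (\<lambda>b. {s (Suc b)..<s b})"
proof (unfold disjoint_family_on_def, intro ballI impI)
  fix b b' :: nat assume "b \<noteq> b'"
  then consider "Suc b \<le> b'" | "Suc b' \<le> b" by linarith
  then have "s b' \<le> s (Suc b) \<or> s b \<le> s (Suc b')"
    by cases (use assms in \<open>simp_all add: decseq_def\<close>)
  then show "{s (Suc b)..<s b} \<inter> {s (Suc b')..<s b'} = {}"
    by auto
qed

lemma disjoint_family_incseq_intervals:
  fixes s :: "nat \<Rightarrow> real"
  assumes "incseq s"
  shows "disjoint_family (\<lambda>b. {s b..<s (Suc b)})"
proof (unfold disjoint_family_on_def, intro ballI impI)
  fix b b' :: nat assume "b \<noteq> b'"
  then consider "Suc b \<le> b'" | "Suc b' \<le> b" by linarith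
  then have "s (Suc b) \<le> s b' \<or> s (Suc b') \<le> s b"
    by cases (use assms in \<open>simp_all add: incseq_def\<close>)
  then show "{s b..<s (Suc b)} \<inter> {s b'..<s (Suc b')} = {}"
    by auto
qed

lemma AE_some_block_collapses:
  fixes Q :: "nat \<Rightarrow> nat \<Rightarrow> real"
  assumes procs: "indep_poisson_procs M n lam N" and "0 < r"
    and Q: "\<And>b. bounded_rates_partition n lam r R (length (sync_word n)) (Q b)"
    and disj: "disjoint_family (\<lambda>b. {Q b 0..<Q b (length (sync_word n))})"
  shows "AE \<omega> in M. \<exists>b. collapses n N (Q b 0) (Q b (length (sync_word n))) \<omega>"
proof -
  have "set (sync_word n) \<subseteq> {..n}"
    using set_sync_word by fastforce
  from AE_some_block_spells[where Q = Q, OF procs \<open>0 < r\<close> this Q disj] show ?thesis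
    by (rule eventually_mono)
      (use spells_sync_word_collapses[OF indep_poisson_procsD(2)[OF procs]] in blast)
qed

lemma AE_collapses_before:
  assumes procs: "indep_poisson_procs M n lam N" and "0 < r"
    and rates: "\<forall>t. \<exists>t0<t. joint_bounded_rates n lam r R (length (sync_word n)) t0 t"
  shows "AE \<omega> in M. \<exists>lo hi. hi \<le> t \<and> collapses n N lo hi \<omega>"
proof -
  let ?m = "length (sync_word n)"
  have "\<forall>s. \<exists>q. q 0 < s \<and> q ?m = s \<and> bounded_rates_partition n lam r R ?m q"
    using rates unfolding joint_bounded_rates_iff by blast
  then obtain G where G: "\<And>s. G s 0 < s" "\<And>s. G s ?m = s"
    "\<And>s. bounded_rates_partition n lam r R ?m (G s)"
    by (metis (no_types))
  define s where "s b = ((\<lambda>x. G x 0) ^^ b) t" for b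
  have s_Suc: "G (s b) 0 = s (Suc b)" for b
    by (simp add: s_def)
  have "decseq s"
    using G(1) s_Suc by (intro decseq_SucI) (metis less_imp_le)
  have "AE \<omega> in M. \<exists>b. collapses n N (G (s b) 0) (G (s b) ?m) \<omega>"
    using disjoint_family_decseq_intervals[OF \<open>decseq s\<close>]
    by (intro AE_some_block_collapses[where Q = "\<lambda>b. G (s b)", OF procs \<open>0 < r\<close> G(3)])
      (simp add: G(2) s_Suc)
  moreover have "G (s b) ?m \<le> t" for b
    using decseqD[OF \<open>decseq s\<close>, of 0 b] by (simp add: G(2) s_def)
  ultimately show ?thesis
    by (elim eventually_mono) blast
qed

lemma periodic_rate_partitions:
  assumes "\<forall>\<tau>. joint_bounded_rates n lam r R m \<tau> (\<tau> + dt)"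
  obtains H where "\<And>\<tau>. H \<tau> 0 = \<tau>" "\<And>\<tau>. H \<tau> m = \<tau> + dt"
    "\<And>\<tau>. bounded_rates_partition n lam r R m (H \<tau>)"
proof -
  have "\<forall>\<tau>. \<exists>q. q 0 = \<tau> \<and> q m = \<tau> + dt \<and> bounded_rates_partition n lam r R m q"
    using assms unfolding joint_bounded_rates_iff by blast
  then show ?thesis
    using that by (metis (no_types))
qed

lemma AE_collapses_after:
  assumes procs: "indep_poisson_procs M n lam N" and "0 < r" and "0 < dt"
    and rates: "\<forall>\<tau>. joint_bounded_rates n lam r R (length (sync_word n)) \<tau> (\<tau> + dt)"
  shows "AE \<omega> in M. \<exists>lo hi. t0 \<le> lo \<and> collapses n N lo hi \<omega>"
proof -
  let ?m = "length (sync_word n)"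
  obtain H where H: "\<And>\<tau>. H \<tau> 0 = \<tau>" "\<And>\<tau>. H \<tau> ?m = \<tau> + dt"
    "\<And>\<tau>. bounded_rates_partition n lam r R ?m (H \<tau>)"
    using periodic_rate_partitions[OF rates] by blast
  define s where "s b = t0 + real b * dt" for b
  have "incseq s"
    using \<open>0 < dt\<close> by (intro incseq_SucI) (simp add: s_def)
  have H_end: "H (s b) ?m = s (Suc b)" for b
    by (simp add: H(2) s_def algebra_simps)
  have "AE \<omega> in M. \<exists>b. collapses n N (H (s b) 0) (H (s b) ?m) \<omega>"
    using disjoint_family_incseq_intervals[OF \<open>incseq s\<close>]
    by (intro AE_some_block_collapses[where Q = "\<lambda>b. H (s b)", OF procs \<open>0 < r\<close> H(3)])
      (simp add: H(1) H_end)
  moreover have "t0 \<le> H (s b) 0" for b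
    using \<open>0 < dt\<close> by (simp add: H(1) s_def)
  ultimately show ?thesis
    by (elim eventually_mono) blast
qed

lemma pullback_attractor_if_AE_collapses:
  assumes procs: "indep_poisson_procs M n lam N"
    and collapse: "\<And>t. AE \<omega> in M. \<exists>lo hi. hi \<le> t \<and> collapses n N lo hi \<omega>"
  shows "global_pullback_attractor (stateX n) (phi n N) M (pb_set n N)"
    and "\<And>t. AE \<omega> in M. \<exists>x. pb_set n N t \<omega> = {x}"
proof -
  note fin = indep_poisson_procsD(2)[OF procs]
  show single: "AE \<omega> in M. \<exists>x. pb_set n N t \<omega> = {x}" for t
    using collapse[of t] by (elim eventually_mono) (metis pb_set_if_collapses[OF fin])
  have "AE \<omega> in M. ((\<lambda>t0. hdist ((\<lambda>x. phi n N t t0 x \<omega>) ` stateX n) (pb_set n N t \<omega>)) \<longlongrightarrow> 0) at_bot"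
    for t
    using collapse[of t]
  proof (elim eventually_mono exE conjE)
    fix \<omega> lo hi assume "hi \<le> t" "collapses n N lo hi \<omega>"
    then have "\<forall>\<^sub>F t0 in at_bot. hdist ((\<lambda>x. phi n N t t0 x \<omega>) ` stateX n) (pb_set n N t \<omega>) = 0"
      unfolding eventually_at_bot_linorder using hdist_eq_0_if_collapses[OF fin] by blast
    then show "((\<lambda>t0. hdist ((\<lambda>x. phi n N t t0 x \<omega>) ` stateX n) (pb_set n N t \<omega>)) \<longlongrightarrow> 0) at_bot"
      by (rule tendsto_eventually)
  qed
  then show "global_pullback_attractor (stateX n) (phi n N) M (pb_set n N)"
    unfolding global_pullback_attractor_def
    using random_invariant_family_pb_set[OF procs single] by blast
qed

lemma forward_attractor_if_AE_collapses:
  assumes procs: "indep_poisson_procs M n lam N"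
    and single: "\<And>t. AE \<omega> in M. \<exists>x. pb_set n N t \<omega> = {x}"
    and collapse: "\<And>t0. AE \<omega> in M. \<exists>lo hi. t0 \<le> lo \<and> collapses n N lo hi \<omega>"
  shows "global_forward_attractor (stateX n) (phi n N) M (pb_set n N)"
proof -
  note fin = indep_poisson_procsD(2)[OF procs]
  have "AE \<omega> in M. ((\<lambda>t. hdist ((\<lambda>x. phi n N t t0 x \<omega>) ` stateX n) (pb_set n N t \<omega>)) \<longlongrightarrow> 0) at_top"
    for t0
    using collapse[of t0]
  proof (elim eventually_mono exE conjE)
    fix \<omega> lo hi assume "t0 \<le> lo" "collapses n N lo hi \<omega>"
    then have "\<forall>\<^sub>F t in at_top. hdist ((\<lambda>x. phi n N t t0 x \<omega>) ` stateX n) (pb_set n N t \<omega>) = 0"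
      unfolding eventually_at_top_linorder using hdist_eq_0_if_collapses[OF fin] by blast
    then show "((\<lambda>t. hdist ((\<lambda>x. phi n N t t0 x \<omega>) ` stateX n) (pb_set n N t \<omega>)) \<longlongrightarrow> 0) at_top"
      by (rule tendsto_eventually)
  qed
  then show ?thesis
    unfolding global_forward_attractor_def
    using random_invariant_family_pb_set[OF procs single] by blast
qed

section \<open>Exponential convergence of the synchronization probability\<close>

lemma power_floor_le_exp:
  fixes q d x :: real
  assumes "0 < q" "q < 1" "0 < d" "0 \<le> x"
  shows "q ^ nat \<lfloor>x / d\<rfloor> \<le> (1 / q) * exp (- (- ln q / d) * x)"
proof -
  let ?K = "nat \<lfloor>x / d\<rfloor>"
  have K: "x / d - 1 \<le> real ?K"
    using assms(3,4) real_of_int_floor_gt_diff_one[of "x / d"] by simp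
  have "ln q < 0"
    using assms(1,2) by simp
  have "q ^ ?K = exp (real ?K * ln q)"
    using assms(1) by (simp add: exp_of_nat_mult)
  also have "\<dots> \<le> exp ((x / d - 1) * ln q)"
    using mult_right_mono_neg[OF K less_imp_le[OF \<open>ln q < 0\<close>]] by simp
  also have "\<dots> = exp (- ln q) * exp (- (- ln q / d) * x)"
    using assms(3) by (simp add: exp_add[symmetric] field_simps)
  also have "exp (- ln q) = 1 / q"
    using assms(1) by (simp add: exp_minus inverse_eq_divide)
  finally show ?thesis .
qed

lemma tendsto_1_at_bot_if_exp_bound:
  fixes f :: "real \<Rightarrow> real"
  assumes "0 < c" and bound: "\<And>t0. t0 \<le> t \<Longrightarrow> 1 - f t0 \<le> C * exp (- c * (t - t0))"
    and le_1: "\<And>t0. f t0 \<le> 1"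
  shows "(f \<longlongrightarrow> 1) at_bot"
proof (rule tendsto_sandwich[of "\<lambda>t0. 1 - C * exp (- c * (t - t0))" f at_bot "\<lambda>_. 1"])
  show "\<forall>\<^sub>F t0 in at_bot. 1 - C * exp (- c * (t - t0)) \<le> f t0"
    unfolding eventually_at_bot_linorder using bound by (intro exI[of _ t]) (simp add: algebra_simps)
  have "filterlim (\<lambda>t0. - c * (t - t0)) at_bot at_bot"
    using \<open>0 < c\<close> by real_asymp
  then have "((\<lambda>t0. C * exp (- c * (t - t0))) \<longlongrightarrow> C * 0) at_bot"
    by (intro tendsto_mult tendsto_const filterlim_compose[OF exp_at_bot])
  then show "((\<lambda>t0. 1 - C * exp (- c * (t - t0))) \<longlongrightarrow> 1) at_bot"
    using tendsto_diff[OF tendsto_const, of _ "C * 0" at_bot 1] by simp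
qed (use le_1 in simp_all)

lemma Gamma_if_collapses:
  assumes "collapses n N t0 t \<omega>" "\<omega> \<in> space M"
  shows "\<omega> \<in> Gamma M n N t t0"
  using assms unfolding collapses_def Gamma_def by auto

lemma Gamma_if_block_spells:
  assumes fin: "locally_finite_jumps n N \<omega>" and "\<omega> \<in> space M"
    and "spells_word n N (sync_word n) q \<omega>" "t0 \<le> q 0" "q (length (sync_word n)) \<le> t"
  shows "\<omega> \<in> Gamma M n N t t0"
proof -
  have "collapses n N (q 0) (q (length (sync_word n))) \<omega>"
    by (rule spells_sync_word_collapses[OF fin assms(3)])
  then have "collapses n N t0 t \<omega>"
    using assms(4,5) by (rule collapses_widen[OF fin])
  then show ?thesis
    using assms(2) by (rule Gamma_if_collapses)
qed

lemma backward_block_start_ge: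
  fixes t0 t dt :: real
  assumes "0 < dt" "b < nat \<lfloor>(t - t0) / dt\<rfloor>"
  shows "t0 \<le> t - real (Suc b) * dt"
proof -
  have "real (Suc b) \<le> (t - t0) / dt"
    using assms(2) by linarith
  then show ?thesis
    using \<open>0 < dt\<close> by (simp add: pos_le_divide_eq)
qed

lemma prob_not_Gamma_le_power:
  assumes procs: "indep_poisson_procs M n lam N" and "0 < r" and "0 < dt"
    and rates: "\<forall>\<tau>. joint_bounded_rates n lam r R (length (sync_word n)) \<tau> (\<tau> + dt)"
  shows "1 - measure M (Gamma M n N t t0)
    \<le> (1 - cell_prob_bound r R ^ (length (sync_word n) * Suc n)) ^ nat \<lfloor>(t - t0) / dt\<rfloor>"
proof -
  interpret prob_space M
    by (rule indep_poisson_procsD(1)[OF procs])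
  note fin = indep_poisson_procsD(2)[OF procs]
  let ?m = "length (sync_word n)"
  obtain H where H: "\<And>\<tau>. H \<tau> 0 = \<tau>" "\<And>\<tau>. H \<tau> ?m = \<tau> + dt"
    "\<And>\<tau>. bounded_rates_partition n lam r R ?m (H \<tau>)"
    using periodic_rate_partitions[OF rates] by blast
  define K where "K = nat \<lfloor>(t - t0) / dt\<rfloor>"
  define s where "s b = t - real b * dt" for b
  have H_end: "H (s (Suc b)) ?m = s b" for b
    by (simp add: H(2) s_def algebra_simps)
  have "decseq s"
    using \<open>0 < dt\<close> by (intro decseq_SucI) (simp add: s_def)
  have "space M - Gamma M n N t t0 \<subseteq>
      {\<omega> \<in> space M. \<forall>b\<in>{..<K}. \<not> spells_word n N (sync_word n) (H (s (Suc b))) \<omega>}"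
  proof (intro subsetI CollectI conjI ballI notI)
    fix \<omega> b assume \<omega>: "\<omega> \<in> space M - Gamma M n N t t0" and "b \<in> {..<K}"
      and spells: "spells_word n N (sync_word n) (H (s (Suc b))) \<omega>"
    have "t0 \<le> H (s (Suc b)) 0"
      using backward_block_start_ge[OF \<open>0 < dt\<close>] \<open>b \<in> {..<K}\<close> by (simp add: H(1) s_def K_def)
    moreover have "H (s (Suc b)) ?m \<le> t"
      using \<open>0 < dt\<close> unfolding H_end by (simp add: s_def)
    ultimately have "\<omega> \<in> Gamma M n N t t0"
      using \<omega> by (intro Gamma_if_block_spells[OF fin _ spells]) auto
    with \<omega> show False
      by simp
  qed auto
  moreover have [measurable]: "Measurable.pred M (spells_word n N (sync_word n) q)" for q
    by (rule pred_spells_word[OF indep_poisson_procsD(3)[OF procs]])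
  ultimately have "prob (space M - Gamma M n N t t0) \<le>
      prob {\<omega> \<in> space M. \<forall>b\<in>{..<K}. \<not> spells_word n N (sync_word n) (H (s (Suc b))) \<omega>}"
    by (intro finite_measure_mono) measurable
  also have "\<dots> \<le> (1 - cell_prob_bound r R ^ (?m * Suc n)) ^ card {..<K}"
  proof (rule prob_no_block_spells_le[OF procs \<open>0 < r\<close>])
    show "set (sync_word n) \<subseteq> {..n}"
      using set_sync_word by fastforce
    show "disjoint_family_on (\<lambda>b. {H (s (Suc b)) 0..<H (s (Suc b)) ?m}) {..<K}"
      using disjoint_family_on_mono[OF subset_UNIV disjoint_family_decseq_intervals[OF \<open>decseq s\<close>]]
      by (simp only: H(1) H_end)
  qed (simp_all add: H(3))
  finally show ?thesis
    using prob_compl[OF Gamma_measurable[OF fin indep_poisson_procsD(3)[OF procs]]]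
    by (simp add: K_def)
qed

lemma prob_Gamma_converges_exponentially:
  assumes procs: "indep_poisson_procs M n lam N" and "0 < r" and "0 < dt"
    and rates: "\<forall>\<tau>. joint_bounded_rates n lam r R (length (sync_word n)) \<tau> (\<tau> + dt)"
  shows "((\<lambda>t0. measure M (Gamma M n N t t0)) \<longlongrightarrow> 1) at_bot"
    and "\<exists>C c. 0 < c \<and> (\<forall>t0\<le>t. 1 - measure M (Gamma M n N t t0) \<le> C * exp (- c * (t - t0)))"
proof -
  \<comment> \<open>For \<open>n = 0\<close> the word is empty and \<open>1 - cell_prob_bound r R ^ 0 = 0\<close>; the maximum keeps the base positive.\<close>
  define q where "q = max (1 - cell_prob_bound r R ^ (length (sync_word n) * Suc n)) (1 / 2)"
  have q: "0 < q" "q < 1"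
    using cell_prob_bound_pos[OF \<open>0 < r\<close>, of R] by (auto simp: q_def)
  have "1 - measure M (Gamma M n N t t0) \<le> (1 / q) * exp (- (- ln q / dt) * (t - t0))" if "t0 \<le> t" for t0
  proof -
    have "1 - measure M (Gamma M n N t t0)
        \<le> (1 - cell_prob_bound r R ^ (length (sync_word n) * Suc n)) ^ nat \<lfloor>(t - t0) / dt\<rfloor>"
      by (rule prob_not_Gamma_le_power[OF procs \<open>0 < r\<close> \<open>0 < dt\<close> rates])
    also have "\<dots> \<le> q ^ nat \<lfloor>(t - t0) / dt\<rfloor>"
      using cell_prob_bound_pos[OF \<open>0 < r\<close>, of R] cell_prob_bound_le_1[of r R]
      by (intro power_mono) (auto simp: q_def power_le_one)
    also have "\<dots> \<le> (1 / q) * exp (- (- ln q / dt) * (t - t0))"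
      using power_floor_le_exp[OF q \<open>0 < dt\<close>] that by simp
    finally show ?thesis .
  qed
  moreover have "0 < - ln q / dt"
    using q \<open>0 < dt\<close> by (simp add: divide_neg_pos)
  ultimately show "\<exists>C c. 0 < c \<and> (\<forall>t0\<le>t. 1 - measure M (Gamma M n N t t0) \<le> C * exp (- c * (t - t0)))"
    by blast
  then show "((\<lambda>t0. measure M (Gamma M n N t t0)) \<longlongrightarrow> 1) at_bot"
    using prob_space.prob_le_1[OF indep_poisson_procsD(1)[OF procs]]
    by (blast intro: tendsto_1_at_bot_if_exp_bound)
qed

theorem theorem14:
  fixes M :: "'w measure" and n :: nat
    and lam :: "nat \<Rightarrow> real \<Rightarrow> real" and N :: "nat \<Rightarrow> 'w \<Rightarrow> real set"
  assumes rates: "admissible_rates n lam"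
    and procs: "indep_poisson_procs M n lam N"
  shows
   "((\<exists>r R. 0 < r \<and> r < R \<and>
        (\<forall>t. \<exists>t0<t. joint_bounded_rates n lam r R (n * (n + 1) div 2) t0 t))
     \<longrightarrow> global_pullback_attractor (stateX n) (phi n N) M (pb_set n N) \<and>
         (\<forall>t. AE \<omega> in M. \<exists>x. pb_set n N t \<omega> = {x}))
    \<and>
    ((\<exists>r R. 0 < r \<and> r < R \<and>
        (\<forall>t. \<exists>t0<t. joint_bounded_rates n lam r R (n * (n + 1) div 2) t0 t)) \<and>
     (\<exists>r R dt. 0 < r \<and> r < R \<and> 0 < dt \<and>
        (\<forall>\<tau>. joint_bounded_rates n lam r R (n * (n + 1) div 2) \<tau> (\<tau> + dt)))
     \<longrightarrow> global_forward_attractor (stateX n) (phi n N) M (pb_set n N) \<and>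
         (\<forall>t. ((\<lambda>t0. measure M (Gamma M n N t t0)) \<longlongrightarrow> 1) at_bot \<and>
              (\<exists>C c. 0 < c \<and> (\<forall>t0\<le>t. 1 - measure M (Gamma M n N t t0) \<le> C * exp (- c * (t - t0))))))"
proof -
  note m = length_sync_word[of n, symmetric]
  have pullback: "global_pullback_attractor (stateX n) (phi n N) M (pb_set n N) \<and>
      (\<forall>t. AE \<omega> in M. \<exists>x. pb_set n N t \<omega> = {x})"
    if A: "\<exists>r R. 0 < r \<and> r < R \<and>
      (\<forall>t. \<exists>t0<t. joint_bounded_rates n lam r R (n * (n + 1) div 2) t0 t)"
  proof -
    obtain r R where "0 < r" "\<forall>t. \<exists>t0<t. joint_bounded_rates n lam r R (length (sync_word n)) t0 t"
      using A unfolding m by blast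
    from pullback_attractor_if_AE_collapses[OF procs AE_collapses_before[OF procs this]]
    show ?thesis by blast
  qed
  moreover have "global_forward_attractor (stateX n) (phi n N) M (pb_set n N) \<and>
      (\<forall>t. ((\<lambda>t0. measure M (Gamma M n N t t0)) \<longlongrightarrow> 1) at_bot \<and>
        (\<exists>C c. 0 < c \<and> (\<forall>t0\<le>t. 1 - measure M (Gamma M n N t t0) \<le> C * exp (- c * (t - t0)))))"
    if A: "\<exists>r R. 0 < r \<and> r < R \<and>
        (\<forall>t. \<exists>t0<t. joint_bounded_rates n lam r R (n * (n + 1) div 2) t0 t)"
      and B: "\<exists>r R dt. 0 < r \<and> r < R \<and> 0 < dt \<and>
        (\<forall>\<tau>. joint_bounded_rates n lam r R (n * (n + 1) div 2) \<tau> (\<tau> + dt))"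
  proof -
    obtain r R dt where "0 < r" "0 < dt"
      and periodic: "\<forall>\<tau>. joint_bounded_rates n lam r R (length (sync_word n)) \<tau> (\<tau> + dt)"
      using B unfolding m by blast
    then show ?thesis
      using pullback[OF A] AE_collapses_after[OF procs \<open>0 < r\<close> \<open>0 < dt\<close> periodic]
        prob_Gamma_converges_exponentially[OF procs \<open>0 < r\<close> \<open>0 < dt\<close> periodic]
        forward_attractor_if_AE_collapses[OF procs]
      by blast
  qed
  ultimately show ?thesis
    by blast
qed

end
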